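(* Let $\tau_1\in\mathcal{L}_0^*$ and $\tau_2\in\mathcal{L}_0$ with $\tau_1\subsetneq\tau_2$. Then there exist a chain $\mathcal{R}\subset\mathcal{L}_0$ with $|\mathcal{R}|=\mathfrak{c}$, a family $\mathcal{S}\subset\mathcal{L}_0$ of pairwise incomparable topologies with $|\mathcal{S}|=\mathfrak{c}$, and a family $\mathcal{T}\subset\mathcal{L}_0\setminus\mathcal{L}_0^*$ of pairwise incomparable topologies with $|\mathcal{T}|=2^{\mathfrak{c}}$, such that $\tau_1\subset\tau\subset\tau_2$ for every $\tau\in\mathcal{R}\cup\mathcal{S}\cup\mathcal{T}$. Moreover, if $\tau_2\in\mathcal{L}_0^*$ then $\mathcal{R},\mathcal{S}$ can be chosen with $\mathcal{R},\mathcal{S}\subset\mathcal{L}_0^*$; and if $\tau_2=\eta$ then $\mathcal{R},\mathcal{S}$ can be chosen with $\mathcal{R},\mathcal{S}\subset\mathcal{L}_0^*$ and such that all spaces $(\mathbb{R},\tau)$ with $\tau\in\mathcal{R}\cup\mathcal{S}$ are pairwise homeomorphic.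
   Context: $\mathfrak{c}=|\mathbb{R}|$. $\eta$ denotes the Euclidean topology on $\mathbb{R}$. $\mathcal{L}$ denotes the family of all Hausdorff topologies $\tau$ on $\mathbb{R}$ with $\tau\subset\eta$. For $\tau\in\mathcal{L}$ and $a\in\mathbb{R}$ let $\mathcal{N}_\tau(a)$ be the neighborhood filter of $a$ in $(\mathbb{R},\tau)$; let $C(\tau)$ be the set of all $a$ with $\mathcal{N}_\tau(a)\neq\mathcal{N}_\eta(a)$. $\mathcal{L}_0:=\{\tau\in\mathcal{L}\mid C(\tau)\subset\{0\}\}$. $\mathcal{L}_0^*$ denotes the family of all $\tau\in\mathcal{L}_0$ such that $\mathcal{N}_\tau(0)=\mathcal{N}_\eta(0)\cap\mathcal{F}$ for some filter $\mathcal{F}$ on $\mathbb{R}$ generated by a countable filter base. A chain is a family of topologies totally ordered by inclusion; two topologies are incomparable if neither is a subset of the other. *)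

theory Defs
  imports "HOL-Analysis.Analysis" "HOL-Library.Equipollence"
begin

text \<open>Topologies on the reals are represented by their families of open sets.\<close>

definition eta :: "real set set" where
  "eta = {U. open U}"

abbreviation top_of :: "real set set \<Rightarrow> real topology" where
  "top_of \<tau> \<equiv> topology (\<lambda>U. U \<in> \<tau>)"

definition Lfam :: "real set set set" where
  "Lfam = {\<tau>. istopology (\<lambda>U. U \<in> \<tau>) \<and> UNIV \<in> \<tau> \<and> Hausdorff_space (top_of \<tau>) \<and> \<tau> \<subseteq> eta}"

definition nbhds :: "real set set \<Rightarrow> real \<Rightarrow> real set set" where
  "nbhds \<tau> a = {A. \<exists>U\<in>\<tau>. a \<in> U \<and> U \<subseteq> A}"

definition Cset :: "real set set \<Rightarrow> real set" where
  "Cset \<tau> = {a. nbhds \<tau> a \<noteq> nbhds eta a}"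

definition L0 :: "real set set set" where
  "L0 = {\<tau> \<in> Lfam. Cset \<tau> \<subseteq> {0}}"

definition countably_based_filter :: "real set set \<Rightarrow> bool" where
  "countably_based_filter F \<longleftrightarrow>
     (\<exists>B. countable B \<and> B \<noteq> {} \<and> {} \<notin> B \<and>
          (\<forall>b1\<in>B. \<forall>b2\<in>B. \<exists>b3\<in>B. b3 \<subseteq> b1 \<inter> b2) \<and>
          F = {A. \<exists>b\<in>B. b \<subseteq> A})"

definition L0star :: "real set set set" where
  "L0star = {\<tau> \<in> L0. \<exists>F. countably_based_filter F \<and> nbhds \<tau> 0 = nbhds eta 0 \<inter> F}"

definition topchain :: "real set set set \<Rightarrow> bool" where
  "topchain R \<longleftrightarrow> (\<forall>\<sigma>\<in>R. \<forall>\<sigma>'\<in>R. \<sigma> \<subseteq> \<sigma>' \<or> \<sigma>' \<subseteq> \<sigma>)"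

definition pairwise_incomparable :: "real set set set \<Rightarrow> bool" where
  "pairwise_incomparable S \<longleftrightarrow>
     (\<forall>\<sigma>\<in>S. \<forall>\<sigma>'\<in>S. \<sigma> \<noteq> \<sigma>' \<longrightarrow> \<not> \<sigma> \<subseteq> \<sigma>' \<and> \<not> \<sigma>' \<subseteq> \<sigma>)"

end

(*
  Away from 0 all topologies in L0 agree with the Euclidean one, so tau1 < tau2 is witnessed
  by an open set W of tau2 that contains 0 but is no tau1-neighbourhood of 0.  Walking along a
  countable tau1-base at 0 one picks points x n outside W, pairwise more than 1 apart, and
  balls I n around them that converge to 0 in tau1.  For a family of index sets, the members
  of tau2 which, whenever they contain 0, contain almost all I n with n in any set of the
  family form a topology between tau1 and tau2; testing with W together with the I n, n in S,
  shows that this topology strictly decreases when a set that is not almost contained in the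
  old members is added.  Continuum many Dedekind cuts of the rationals give the chain, an
  almost disjoint family of branches of the binary tree gives the antichain, and adding
  infinitely many disjoint columns to 2^c incomparable subfamilies of branches gives the
  antichain outside L0star, by a diagonal argument against a countable base at 0.
  For tau2 = eta one varies the radii of the I n instead of the index sets: piecewise linear
  stretchings of the intervals are then homeomorphisms between all these topologies.
*)

theory Submission
  imports Defs
begin

section \<open>Topologies in L0\<close>

lemma L0_istopology: "\<tau> \<in> L0 \<Longrightarrow> istopology (\<lambda>U. U \<in> \<tau>)"
  and L0_UNIV: "\<tau> \<in> L0 \<Longrightarrow> UNIV \<in> \<tau>"
  and L0_Hausdorff: "\<tau> \<in> L0 \<Longrightarrow> Hausdorff_space (top_of \<tau>)"
  and L0_subset_eta: "\<tau> \<in> L0 \<Longrightarrow> \<tau> \<subseteq> eta"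
  by (simp_all add: L0_def Lfam_def)

lemma L0_open: "\<tau> \<in> L0 \<Longrightarrow> U \<in> \<tau> \<Longrightarrow> open U"
  using L0_subset_eta eta_def by blast

lemma topspace_top_of: "istopology (\<lambda>U. U \<in> \<tau>) \<Longrightarrow> UNIV \<in> \<tau> \<Longrightarrow> topspace (top_of \<tau>) = UNIV"
  by (metis openin_subset subset_antisym topology_inverse' top_greatest)

lemma topology_Int: "istopology (\<lambda>U. U \<in> (\<tau>::real set set)) \<Longrightarrow> U \<in> \<tau> \<Longrightarrow> V \<in> \<tau> \<Longrightarrow> U \<inter> V \<in> \<tau>"
  using openin_Int[of "top_of \<tau>" U V] by simp

lemma topology_Un: "istopology (\<lambda>U. U \<in> (\<tau>::real set set)) \<Longrightarrow> U \<in> \<tau> \<Longrightarrow> V \<in> \<tau> \<Longrightarrow> U \<union> V \<in> \<tau>"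
  using openin_Un[of "top_of \<tau>" U V] by simp

lemma topology_Union: "istopology (\<lambda>U. U \<in> (\<tau>::real set set)) \<Longrightarrow> K \<subseteq> \<tau> \<Longrightarrow> \<Union>K \<in> \<tau>"
  using openin_Union[of K "top_of \<tau>"] by auto

lemma nbhds_mono: "\<tau> \<subseteq> \<sigma> \<Longrightarrow> nbhds \<tau> a \<subseteq> nbhds \<sigma> a"
  unfolding nbhds_def by blast

lemma nbhdsI: "U \<in> \<tau> \<Longrightarrow> a \<in> U \<Longrightarrow> U \<subseteq> V \<Longrightarrow> V \<in> nbhds \<tau> a"
  unfolding nbhds_def by blast

lemma nbhds_superset:
  assumes "V \<in> nbhds \<tau> a" "V \<subseteq> V'"
  shows "V' \<in> nbhds \<tau> a"
proof -
  obtain U where "U \<in> \<tau>" "a \<in> U" "U \<subseteq> V"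
    using assms(1) unfolding nbhds_def by blast
  with assms(2) show ?thesis
    by (meson nbhdsI order_trans)
qed

lemma nbhds_eta_iff: "V \<in> nbhds eta a \<longleftrightarrow> (\<exists>e>0. ball a e \<subseteq> V)"
proof
  assume "V \<in> nbhds eta a"
  then obtain U where "open U" "a \<in> U" "U \<subseteq> V"
    unfolding nbhds_def eta_def by blast
  moreover obtain e where "e > 0" "ball a e \<subseteq> U"
    using open_contains_ball \<open>open U\<close> \<open>a \<in> U\<close> by blast
  ultimately show "\<exists>e>0. ball a e \<subseteq> V"
    by blast
next
  assume "\<exists>e>0. ball a e \<subseteq> V"
  then obtain e where "e > 0" "ball a e \<subseteq> V"
    by blast
  moreover have "ball a e \<in> eta"
    by (simp add: eta_def)
  ultimately show "V \<in> nbhds eta a"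
    using nbhdsI[of "ball a e" eta a V] by simp
qed

lemma L0_nbhds: "\<tau> \<in> L0 \<Longrightarrow> a \<noteq> 0 \<Longrightarrow> nbhds \<tau> a = nbhds eta a"
  unfolding L0_def Cset_def by auto

lemma L0_openI:
  assumes "\<tau> \<in> L0" "open U" "0 \<in> U \<Longrightarrow> U \<in> nbhds \<tau> 0"
  shows "U \<in> \<tau>"
proof -
  have "U \<in> nbhds \<tau> a" if "a \<in> U" for a
  proof (cases "a = 0")
    case False
    with that \<open>open U\<close> have "U \<in> nbhds eta a"
      by (intro nbhdsI[of U]) (auto simp: eta_def)
    with L0_nbhds[OF \<open>\<tau> \<in> L0\<close> False] show ?thesis by simp
  qed (use that assms(3) in simp)
  then have "U = \<Union>{V \<in> \<tau>. V \<subseteq> U}"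
    unfolding nbhds_def by blast
  also have "\<dots> \<in> \<tau>"
    by (rule topology_Union[OF L0_istopology[OF \<open>\<tau> \<in> L0\<close>]]) blast
  finally show ?thesis .
qed

lemma L0_open_without_0: "\<tau> \<in> L0 \<Longrightarrow> open U \<Longrightarrow> 0 \<notin> U \<Longrightarrow> U \<in> \<tau>"
  using L0_openI by blast

lemma L0_between:
  assumes "\<tau>1 \<in> L0" "\<tau>2 \<in> L0" "istopology (\<lambda>U. U \<in> \<sigma>)" "UNIV \<in> \<sigma>" "\<tau>1 \<subseteq> \<sigma>" "\<sigma> \<subseteq> \<tau>2"
  shows "\<sigma> \<in> L0"
proof -
  have "Hausdorff_space (top_of \<sigma>)"
  proof (rule Hausdorff_space_expansive[OF L0_Hausdorff[OF \<open>\<tau>1 \<in> L0\<close>]])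
    show "topspace (top_of \<tau>1) = topspace (top_of \<sigma>)"
      using assms topspace_top_of L0_istopology L0_UNIV by metis
  qed (use assms L0_istopology in auto)
  moreover have "\<sigma> \<subseteq> eta"
    using assms(2,6) L0_subset_eta by blast
  moreover have "nbhds \<sigma> a = nbhds eta a" if "a \<noteq> 0" for a
  proof (rule subset_antisym)
    show "nbhds \<sigma> a \<subseteq> nbhds eta a"
      using nbhds_mono[OF \<open>\<sigma> \<subseteq> eta\<close>] .
    show "nbhds eta a \<subseteq> nbhds \<sigma> a"
      unfolding L0_nbhds[OF assms(1) that, symmetric] by (rule nbhds_mono[OF \<open>\<tau>1 \<subseteq> \<sigma>\<close>])
  qed
  ultimately show ?thesis
    using assms(3,4) unfolding L0_def Lfam_def Cset_def by auto
qed

lemma eta_L0: "eta \<in> L0"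
proof -
  have "top_of eta = euclidean"
    by (simp add: eta_def)
  then show ?thesis
    unfolding L0_def Lfam_def Cset_def by (auto simp: eta_def)
qed

lemma L0starI:
  assumes "\<tau> \<in> L0" "countable C" "C \<subseteq> nbhds \<tau> 0"
    and cofinal: "\<And>V. V \<in> nbhds \<tau> 0 \<Longrightarrow> \<exists>c\<in>C. c \<subseteq> V"
  shows "\<tau> \<in> L0star"
proof -
  have C_nbhds: "nbhds \<tau> 0 = {A. \<exists>c\<in>C. c \<subseteq> A}"
  proof
    show "nbhds \<tau> 0 \<subseteq> {A. \<exists>c\<in>C. c \<subseteq> A}"
      using cofinal by blast
    show "{A. \<exists>c\<in>C. c \<subseteq> A} \<subseteq> nbhds \<tau> 0"
      using assms(3) nbhds_superset by blast
  qed
  have "UNIV \<in> nbhds \<tau> 0"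
    using L0_UNIV[OF assms(1)] by (auto intro: nbhdsI)
  then have "C \<noteq> {}"
    using cofinal by blast
  moreover have "{} \<notin> C"
    using assms(3) unfolding nbhds_def by blast
  moreover have "\<exists>c\<in>C. c \<subseteq> c1 \<inter> c2" if "c1 \<in> C" "c2 \<in> C" for c1 c2
  proof -
    obtain U1 U2 where "U1 \<in> \<tau>" "U2 \<in> \<tau>" "0 \<in> U1 \<inter> U2" "U1 \<subseteq> c1" "U2 \<subseteq> c2"
      using \<open>c1 \<in> C\<close> \<open>c2 \<in> C\<close> assms(3) unfolding nbhds_def by blast
    moreover have "U1 \<inter> U2 \<in> \<tau>"
      using calculation topology_Int[OF L0_istopology[OF assms(1)]] by blast
    ultimately show ?thesis
      using cofinal[of "c1 \<inter> c2"] by (meson Int_mono nbhdsI)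
  qed
  ultimately have "countably_based_filter (nbhds \<tau> 0)"
    unfolding countably_based_filter_def C_nbhds using \<open>countable C\<close> by (intro exI[of _ C]) blast
  moreover have "nbhds \<tau> 0 \<subseteq> nbhds eta 0"
    by (rule nbhds_mono[OF L0_subset_eta[OF assms(1)]])
  ultimately have "\<exists>F. countably_based_filter F \<and> nbhds \<tau> 0 = nbhds eta 0 \<inter> F"
    by (intro exI[of _ "nbhds \<tau> 0"]) (simp add: Int_absorb1)
  then show ?thesis
    using assms(1) unfolding L0star_def by blast
qed

lemma ball_inverse_Suc_subset:
  assumes "(e::real) > 0"
  obtains k where "\<And>n. n \<ge> k \<Longrightarrow> ball a (1 / (real n + 1)) \<subseteq> ball a e"
proof -
  obtain k :: nat where "1 / e < real k"
    using reals_Archimedean2 by blast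
  have "1 / (real n + 1) \<le> e" if "n \<ge> k" for n
  proof -
    have "1 / e < real n + 1"
      using \<open>1 / e < real k\<close> of_nat_mono[OF that, where 'a=real] by linarith
    then have "1 < e * (real n + 1)"
      using assms by (simp add: divide_less_eq mult.commute)
    then show ?thesis
      by (simp add: divide_le_eq)
  qed
  then show ?thesis
    using that subset_ball by blast
qed

lemma eta_L0star: "eta \<in> L0star"
proof (rule L0starI[OF eta_L0, of "range (\<lambda>n. ball 0 (1 / (real n + 1)))"])
  have "ball 0 (1 / (real n + 1)) \<in> nbhds eta 0" for n
    unfolding nbhds_eta_iff by (intro exI[of _ "1 / (real n + 1)"]) simp
  then show "range (\<lambda>n. ball 0 (1 / (real n + 1))) \<subseteq> nbhds eta 0"
    by blast
  fix V
  assume "V \<in> nbhds eta 0"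
  then obtain e where "e > 0" "ball 0 e \<subseteq> V"
    using nbhds_eta_iff by blast
  then show "\<exists>c\<in>range (\<lambda>n. ball 0 (1 / (real n + 1))). c \<subseteq> V"
    by (metis ball_inverse_Suc_subset order_refl order_trans rangeI)
qed simp

definition sets_converge_to_0 :: "real set set \<Rightarrow> (nat \<Rightarrow> real set) \<Rightarrow> bool" where
  "sets_converge_to_0 \<tau> J \<longleftrightarrow> (\<forall>V\<in>nbhds \<tau> 0. finite {n. \<not> J n \<subseteq> V})"

lemma sets_converge_to_0I:
  assumes "\<And>V. V \<in> nbhds \<tau> 0 \<Longrightarrow> \<exists>m. \<forall>n\<ge>m. J n \<subseteq> V"
  shows "sets_converge_to_0 \<tau> J"
  unfolding sets_converge_to_0_def
proof
  fix V
  assume "V \<in> nbhds \<tau> 0"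
  then obtain m where "\<forall>n\<ge>m. J n \<subseteq> V"
    using assms by blast
  then have "{n. \<not> J n \<subseteq> V} \<subseteq> {..<m}"
    using not_less by blast
  then show "finite {n. \<not> J n \<subseteq> V}"
    using finite_subset by blast
qed

lemma sets_converge_to_0_subset:
  assumes "sets_converge_to_0 \<tau> J" "\<And>n. J' n \<subseteq> J n"
  shows "sets_converge_to_0 \<tau> J'"
proof -
  have "{n. \<not> J' n \<subseteq> V} \<subseteq> {n. \<not> J n \<subseteq> V}" for V
    using assms(2) by blast
  then show ?thesis
    using assms(1) finite_subset unfolding sets_converge_to_0_def by meson
qed

lemma sets_converge_to_0E:
  assumes "sets_converge_to_0 \<tau> J" "V \<in> nbhds \<tau> 0"
  obtains n where "J n \<subseteq> V"
proof -
  have "finite {n. \<not> J n \<subseteq> V}"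
    using assms unfolding sets_converge_to_0_def by blast
  then show ?thesis
    using that ex_new_if_finite[OF infinite_UNIV_nat] by blast
qed

lemma countably_based_filter_superset:
  assumes "countably_based_filter F" "A \<in> F" "A \<subseteq> A'"
  shows "A' \<in> F"
proof -
  obtain B where F: "F = {A. \<exists>b\<in>B. b \<subseteq> A}"
    using assms(1) unfolding countably_based_filter_def by blast
  show ?thesis
    using assms(2,3) unfolding F by blast
qed

lemma countably_based_filter_nested_base:
  assumes "countably_based_filter F"
  obtains D :: "nat \<Rightarrow> real set"
  where "\<And>n. D n \<in> F" "\<And>A. A \<in> F \<Longrightarrow> \<exists>i. \<forall>n\<ge>i. D n \<subseteq> A"
proof -
  obtain B where "countable B" "B \<noteq> {}"
    and directed: "\<forall>b1\<in>B. \<forall>b2\<in>B. \<exists>b3\<in>B. b3 \<subseteq> b1 \<inter> b2" and F: "F = {A. \<exists>b\<in>B. b \<subseteq> A}"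
    using assms unfolding countably_based_filter_def by blast
  have F_Int: "A \<inter> A' \<in> F" if AA': "A \<in> F" "A' \<in> F" for A A'
  proof -
    obtain b b' where "b \<in> B" "b' \<in> B" "b \<subseteq> A" "b' \<subseteq> A'"
      using AA' unfolding F by blast
    then obtain b'' where "b'' \<in> B" "b'' \<subseteq> b \<inter> b'"
      using directed by blast
    then have "b'' \<subseteq> A \<inter> A'"
      using \<open>b \<subseteq> A\<close> \<open>b' \<subseteq> A'\<close> by blast
    with \<open>b'' \<in> B\<close> show ?thesis
      unfolding F by blast
  qed
  define c where "c = from_nat_into B"
  define D where "D n = (\<Inter>i\<le>n. c i)" for n
  have "c n \<in> F" for n
    using from_nat_into[OF \<open>B \<noteq> {}\<close>] unfolding c_def F by blast
  then have D_in: "D n \<in> F" for n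
    unfolding D_def by (induction n) (simp_all add: atMost_Suc F_Int)
  have base: "\<exists>i. \<forall>n\<ge>i. D n \<subseteq> A" if A: "A \<in> F" for A
  proof -
    obtain b where "b \<in> B" "b \<subseteq> A"
      using A unfolding F by blast
    moreover obtain i where "c i = b"
      using from_nat_into_surj[OF \<open>countable B\<close> \<open>b \<in> B\<close>] c_def by blast
    moreover have "D n \<subseteq> c i" if "n \<ge> i" for n
      unfolding D_def by (rule INT_lower) (use that in simp)
    ultimately show ?thesis
      by blast
  qed
  show ?thesis
    by (rule that[OF D_in base])
qed

text \<open>Each \<open>D n \<union> ball 0 (1 / (n + 1))\<close> with \<open>D\<close> a nested base of \<open>F\<close> is a
  \<open>\<tau>\<close>-neighbourhood of \<open>0\<close>; open sets inside them converge to \<open>0\<close>.\<close>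

lemma L0star_converging_base:
  assumes "\<tau> \<in> L0star"
  obtains N where "\<And>n. N n \<in> \<tau>" "\<And>n. 0 \<in> N n" "sets_converge_to_0 \<tau> N"
proof -
  obtain F where F: "countably_based_filter F" and nbhds_F: "nbhds \<tau> 0 = nbhds eta 0 \<inter> F"
    using assms unfolding L0star_def by blast
  obtain D :: "nat \<Rightarrow> real set"
    where D: "\<And>n. D n \<in> F" and base: "\<And>A. A \<in> F \<Longrightarrow> \<exists>i. \<forall>n\<ge>i. D n \<subseteq> A"
    using countably_based_filter_nested_base[OF F] by blast
  define V where "V n = D n \<union> ball 0 (1 / (real n + 1))" for n
  have "V n \<in> F" for n
    unfolding V_def by (rule countably_based_filter_superset[OF F D Un_upper1])
  moreover have "V n \<in> nbhds eta 0" for n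
    unfolding V_def nbhds_eta_iff using Un_upper2 by (intro exI[of _ "1 / (real n + 1)"]) simp
  ultimately have "V n \<in> nbhds \<tau> 0" for n
    unfolding nbhds_F by simp
  then have "\<forall>n. \<exists>U\<in>\<tau>. 0 \<in> U \<and> U \<subseteq> V n"
    by (simp add: nbhds_def)
  then have "\<forall>n. \<exists>U. U \<in> \<tau> \<and> 0 \<in> U \<and> U \<subseteq> V n"
    by blast
  from choice[OF this] obtain N where N: "\<And>n. N n \<in> \<tau>" "\<And>n. 0 \<in> N n"
    and N_V: "\<And>n. N n \<subseteq> V n"
    by blast
  have "sets_converge_to_0 \<tau> N"
  proof (rule sets_converge_to_0I)
    fix U
    assume "U \<in> nbhds \<tau> 0"
    then have "U \<in> F" "U \<in> nbhds eta 0"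
      unfolding nbhds_F by simp_all
    obtain i where i: "\<forall>n\<ge>i. D n \<subseteq> U"
      using base[OF \<open>U \<in> F\<close>] by blast
    obtain e where "e > 0" "ball 0 e \<subseteq> U"
      using \<open>U \<in> nbhds eta 0\<close> unfolding nbhds_eta_iff by blast
    obtain k where k: "\<And>n. n \<ge> k \<Longrightarrow> ball 0 (1 / (real n + 1)) \<subseteq> ball (0::real) e"
      using ball_inverse_Suc_subset[OF \<open>e > 0\<close>] by blast
    have "N n \<subseteq> U" if "n \<ge> max i k" for n
    proof -
      have "D n \<subseteq> U"
        using i that by simp
      moreover have "ball 0 (1 / (real n + 1)) \<subseteq> U"
        using k[of n] that \<open>ball 0 e \<subseteq> U\<close> by simp
      ultimately show ?thesis
        using N_V[of n] unfolding V_def by blast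
    qed
    then show "\<exists>m. \<forall>n\<ge>m. N n \<subseteq> U"
      by blast
  qed
  with N that show ?thesis
    by blast
qed

section \<open>Coarsening a topology at 0\<close>

definition coarsening :: "real set set \<Rightarrow> (nat \<Rightarrow> real set) \<Rightarrow> nat set set \<Rightarrow> real set set" where
  "coarsening \<tau> J \<A> = {U \<in> \<tau>. 0 \<in> U \<longrightarrow> (\<forall>A\<in>\<A>. finite {n \<in> A. \<not> J n \<subseteq> U})}"

lemma coarsening_istopology:
  assumes "istopology (\<lambda>U. U \<in> \<tau>)"
  shows "istopology (\<lambda>U. U \<in> coarsening \<tau> J \<A>)"
  unfolding istopology_def
proof (intro conjI allI impI)
  fix S T
  assume S: "S \<in> coarsening \<tau> J \<A>" and T: "T \<in> coarsening \<tau> J \<A>"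
  have "S \<inter> T \<in> \<tau>"
    using S T topology_Int[OF assms] unfolding coarsening_def by blast
  moreover have "finite {n \<in> A. \<not> J n \<subseteq> S \<inter> T}" if "0 \<in> S \<inter> T" "A \<in> \<A>" for A
  proof -
    have "finite {n \<in> A. \<not> J n \<subseteq> S}" "finite {n \<in> A. \<not> J n \<subseteq> T}"
      using S T that unfolding coarsening_def by blast+
    moreover have "{n \<in> A. \<not> J n \<subseteq> S \<inter> T} = {n \<in> A. \<not> J n \<subseteq> S} \<union> {n \<in> A. \<not> J n \<subseteq> T}"
      by blast
    ultimately show ?thesis
      by simp
  qed
  ultimately show "S \<inter> T \<in> coarsening \<tau> J \<A>"
    unfolding coarsening_def by blast
next
  fix K
  assume K: "\<forall>S\<in>K. S \<in> coarsening \<tau> J \<A>"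
  have "\<Union>K \<in> \<tau>"
    using K topology_Union[OF assms] unfolding coarsening_def by blast
  moreover have "finite {n \<in> A. \<not> J n \<subseteq> \<Union>K}" if "0 \<in> \<Union>K" "A \<in> \<A>" for A
  proof -
    obtain S where "S \<in> K" "0 \<in> S"
      using \<open>0 \<in> \<Union>K\<close> by blast
    then have "finite {n \<in> A. \<not> J n \<subseteq> S}"
      using K \<open>A \<in> \<A>\<close> unfolding coarsening_def by blast
    then show ?thesis
      by (rule rev_finite_subset) (use \<open>S \<in> K\<close> in blast)
  qed
  ultimately show "\<Union>K \<in> coarsening \<tau> J \<A>"
    unfolding coarsening_def by blast
qed

lemma coarsening_subset: "coarsening \<tau> J \<A> \<subseteq> \<tau>"
  unfolding coarsening_def by blast

lemma UNIV_in_coarsening: "UNIV \<in> \<tau> \<Longrightarrow> UNIV \<in> coarsening \<tau> J \<A>"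
  unfolding coarsening_def by simp

lemma subset_coarsening:
  assumes "\<tau>' \<subseteq> \<tau>" "sets_converge_to_0 \<tau>' J"
  shows "\<tau>' \<subseteq> coarsening \<tau> J \<A>"
proof
  fix U
  assume "U \<in> \<tau>'"
  have "finite {n \<in> A. \<not> J n \<subseteq> U}" if "0 \<in> U" for A
  proof -
    have "finite {n. \<not> J n \<subseteq> U}"
      using assms(2) nbhdsI[OF \<open>U \<in> \<tau>'\<close> that order_refl] unfolding sets_converge_to_0_def by blast
    then show ?thesis
      by (rule rev_finite_subset) blast
  qed
  then show "U \<in> coarsening \<tau> J \<A>"
    using \<open>U \<in> \<tau>'\<close> assms(1) unfolding coarsening_def by blast
qed

lemma coarsening_antimono:
  assumes "\<And>B. B \<in> \<B> \<Longrightarrow> \<exists>A\<in>\<A>. B \<subseteq> A"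
  shows "coarsening \<tau> J \<A> \<subseteq> coarsening \<tau> J \<B>"
proof
  fix U
  assume U: "U \<in> coarsening \<tau> J \<A>"
  have "finite {n \<in> B. \<not> J n \<subseteq> U}" if "0 \<in> U" "B \<in> \<B>" for B
  proof -
    obtain A where "A \<in> \<A>" "B \<subseteq> A"
      using assms \<open>B \<in> \<B>\<close> by blast
    then have "finite {n \<in> A. \<not> J n \<subseteq> U}"
      using U \<open>0 \<in> U\<close> unfolding coarsening_def by blast
    then show ?thesis
      by (rule rev_finite_subset) (use \<open>B \<subseteq> A\<close> in blast)
  qed
  with U show "U \<in> coarsening \<tau> J \<B>"
    unfolding coarsening_def by blast
qed

lemma coarsening_antimono_sets:
  assumes "\<And>n. J' n \<subseteq> J n"
  shows "coarsening \<tau> J \<A> \<subseteq> coarsening \<tau> J' \<A>"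
proof
  fix U
  assume U: "U \<in> coarsening \<tau> J \<A>"
  have "finite {n \<in> A. \<not> J' n \<subseteq> U}" if "0 \<in> U" "A \<in> \<A>" for A
  proof -
    have "finite {n \<in> A. \<not> J n \<subseteq> U}"
      using U that unfolding coarsening_def by blast
    then show ?thesis
      by (rule rev_finite_subset) (use assms in blast)
  qed
  with U show "U \<in> coarsening \<tau> J' \<A>"
    unfolding coarsening_def by blast
qed

lemma coarsening_L0:
  assumes "\<tau>1 \<in> L0" "\<tau>2 \<in> L0" "\<tau>1 \<subseteq> \<tau>2" "sets_converge_to_0 \<tau>1 J"
  shows "coarsening \<tau>2 J \<A> \<in> L0"
proof (rule L0_between[OF assms(1,2)])
  show "istopology (\<lambda>U. U \<in> coarsening \<tau>2 J \<A>)"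
    by (rule coarsening_istopology[OF L0_istopology[OF assms(2)]])
  show "UNIV \<in> coarsening \<tau>2 J \<A>"
    by (rule UNIV_in_coarsening[OF L0_UNIV[OF assms(2)]])
  show "\<tau>1 \<subseteq> coarsening \<tau>2 J \<A>"
    by (rule subset_coarsening[OF assms(3,4)])
qed (rule coarsening_subset)

lemma Un_tail_in_coarsening:
  assumes "\<tau> \<in> L0" "U \<in> \<tau>" "\<And>n. open (J n)" "\<And>n. 0 \<notin> J n"
  shows "U \<union> (\<Union>m\<in>{m \<in> A. k \<le> m}. J m) \<in> coarsening \<tau> J {A}"
proof -
  have "(\<Union>m\<in>{m \<in> A. k \<le> m}. J m) \<in> \<tau>"
  proof (rule L0_open_without_0[OF assms(1)])
    show "open (\<Union>m\<in>{m \<in> A. k \<le> m}. J m)"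
      using assms(3) by (intro open_UN) blast
    show "0 \<notin> (\<Union>m\<in>{m \<in> A. k \<le> m}. J m)"
      using assms(4) by blast
  qed
  then have "U \<union> (\<Union>m\<in>{m \<in> A. k \<le> m}. J m) \<in> \<tau>"
    by (rule topology_Un[OF L0_istopology[OF assms(1)] assms(2)])
  moreover have "{n \<in> A. \<not> J n \<subseteq> U \<union> (\<Union>m\<in>{m \<in> A. k \<le> m}. J m)} \<subseteq> {..<k}"
    by auto
  then have "finite {n \<in> A. \<not> J n \<subseteq> U \<union> (\<Union>m\<in>{m \<in> A. k \<le> m}. J m)}"
    by (rule finite_subset[OF _ finite_lessThan])
  ultimately show ?thesis
    unfolding coarsening_def by blast
qed

text \<open>For a single index set \<open>A\<close>, the sets \<open>N j \<union> (\<Union>m\<in>{m \<in> A. k \<le> m}. J m)\<close>,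
  with \<open>N\<close> a converging base of \<open>\<tau>2\<close> at \<open>0\<close>, form a countable base at \<open>0\<close>.\<close>

lemma coarsening_L0star:
  assumes "\<tau>1 \<in> L0" "\<tau>2 \<in> L0star" "\<tau>1 \<subseteq> \<tau>2" "sets_converge_to_0 \<tau>1 J"
    and J: "\<And>n. open (J n)" "\<And>n. 0 \<notin> J n"
  shows "coarsening \<tau>2 J {A} \<in> L0star"
proof -
  have "\<tau>2 \<in> L0"
    using assms(2) by (simp add: L0star_def)
  obtain N where N: "\<And>n. N n \<in> \<tau>2" "\<And>n. 0 \<in> N n" "sets_converge_to_0 \<tau>2 N"
    using L0star_converging_base[OF assms(2)] by blast
  define E where "E k = (\<Union>m\<in>{m \<in> A. k \<le> m}. J m)" for k
  define C where "C = (\<lambda>(j, k). N j \<union> E k) ` UNIV"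
  have C_open: "N j \<union> E k \<in> coarsening \<tau>2 J {A}" for j k
    unfolding E_def by (rule Un_tail_in_coarsening[OF \<open>\<tau>2 \<in> L0\<close> N(1) J])
  show ?thesis
  proof (rule L0starI)
    show "coarsening \<tau>2 J {A} \<in> L0"
      using coarsening_L0[OF assms(1) \<open>\<tau>2 \<in> L0\<close> assms(3,4)] .
    show "countable C"
      unfolding C_def by simp
    show "C \<subseteq> nbhds (coarsening \<tau>2 J {A}) 0"
      unfolding C_def using C_open N(2) by (auto intro: nbhdsI)
    fix V
    assume "V \<in> nbhds (coarsening \<tau>2 J {A}) 0"
    then obtain U where U: "U \<in> coarsening \<tau>2 J {A}" "0 \<in> U" "U \<subseteq> V"
      unfolding nbhds_def by blast
    then have "U \<in> \<tau>2" "finite {n \<in> A. \<not> J n \<subseteq> U}"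
      unfolding coarsening_def by auto
    obtain j where "N j \<subseteq> U"
      using sets_converge_to_0E[OF N(3) nbhdsI[OF \<open>U \<in> \<tau>2\<close> U(2) order_refl]] .
    moreover obtain k where "{n \<in> A. \<not> J n \<subseteq> U} \<subseteq> {..<k}"
      using finite_nat_bounded[OF \<open>finite {n \<in> A. \<not> J n \<subseteq> U}\<close>] by blast
    then have "E k \<subseteq> U"
      unfolding E_def by auto
    ultimately have "N j \<union> E k \<subseteq> V"
      using U(3) by blast
    moreover have "N j \<union> E k \<in> C"
      unfolding C_def by (rule image_eqI[of _ _ "(j, k)"]) simp_all
    ultimately show "\<exists>c\<in>C. c \<subseteq> V"
      by blast
  qed
qed

lemma vimage_in_coarsening_eta:
  assumes "continuous_on UNIV f" "f 0 = 0" "\<And>n. f ` J n \<subseteq> J' n"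
    and "U \<in> coarsening eta J' \<A>"
  shows "f -` U \<in> coarsening eta J \<A>"
proof -
  have "open U"
    using assms(4) unfolding coarsening_def eta_def by blast
  then have "open (f -` U)"
    using assms(1) by (simp add: continuous_on_open_vimage)
  moreover have "finite {n \<in> A. \<not> J n \<subseteq> f -` U}" if "0 \<in> f -` U" "A \<in> \<A>" for A
  proof -
    have "finite {n \<in> A. \<not> J' n \<subseteq> U}"
      using assms(2,4) that unfolding coarsening_def by auto
    then show ?thesis
      by (rule rev_finite_subset) (use assms(3) in blast)
  qed
  ultimately show ?thesis
    unfolding coarsening_def eta_def by blast
qed

lemma continuous_map_top_of:
  assumes "istopology (\<lambda>U. U \<in> \<sigma>)" "UNIV \<in> \<sigma>" "istopology (\<lambda>U. U \<in> \<sigma>')" "UNIV \<in> \<sigma>'"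
    and "\<And>U. U \<in> \<sigma>' \<Longrightarrow> f -` U \<in> \<sigma>"
  shows "continuous_map (top_of \<sigma>) (top_of \<sigma>') f"
  using assms by (simp add: continuous_map_def topspace_top_of vimage_def)

lemma coarsening_eta_homeomorphic:
  assumes "continuous_on UNIV f" "continuous_on UNIV f'" "\<And>y. f' (f y) = y" "\<And>y. f (f' y) = y"
    and "f 0 = 0" "\<And>n. f ` J n \<subseteq> J' n" "\<And>n. f' ` J' n \<subseteq> J n"
  shows "top_of (coarsening eta J \<A>) homeomorphic_space top_of (coarsening eta J' \<A>)"
proof -
  have "f' 0 = 0"
    using assms(3,5) by metis
  have top: "istopology (\<lambda>U. U \<in> coarsening eta K \<A>)" "UNIV \<in> coarsening eta K \<A>" for K
    using coarsening_istopology UNIV_in_coarsening L0_istopology L0_UNIV eta_L0 by blast+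
  have "homeomorphic_maps (top_of (coarsening eta J \<A>)) (top_of (coarsening eta J' \<A>)) f f'"
    unfolding homeomorphic_maps_def
    using continuous_map_top_of[OF top top vimage_in_coarsening_eta[OF assms(1,5,6)]]
      continuous_map_top_of[OF top top vimage_in_coarsening_eta[OF assms(2) \<open>f' 0 = 0\<close> assms(7)]]
    by (simp add: topspace_top_of[OF top] assms(3,4))
  then show ?thesis
    unfolding homeomorphic_space_def by blast
qed

section \<open>Chains and antichains of index sets\<close>

definition rat_enum :: "nat \<Rightarrow> real" where
  "rat_enum = from_nat_into \<rat>"

lemma rat_enum_dense:
  assumes "a < b"
  obtains i where "a < rat_enum i" "rat_enum i < b"
proof -
  obtain q where "q \<in> \<rat>" "a < q" "q < b"
    using Rats_dense_in_real[OF assms] by blast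
  with from_nat_into_surj[OF countable_rat \<open>q \<in> \<rat>\<close>] that show ?thesis
    unfolding rat_enum_def by metis
qed

definition cut :: "real \<Rightarrow> nat \<Rightarrow> bool" where
  "cut u i \<longleftrightarrow> rat_enum i < u"

lemma inj_cut: "inj cut"
proof (rule injI)
  fix u v :: real
  assume "cut u = cut v"
  show "u = v"
  proof (rule ccontr)
    assume "u \<noteq> v"
    then obtain i where "min u v < rat_enum i" "rat_enum i < max u v"
      using rat_enum_dense[of "min u v" "max u v"] by (metis min_less_iff_conj max_less_iff_conj linorder_neq_iff)
    then have "cut u i \<noteq> cut v i"
      unfolding cut_def by (auto simp: min_def max_def split: if_splits)
    with \<open>cut u = cut v\<close> show False
      by simp
  qed
qed

text \<open>Each rational below \<open>u\<close> is repeated infinitely often, so that the sets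
  of two different reals differ by an infinite set.\<close>

definition cut_set :: "real \<Rightarrow> nat set" where
  "cut_set u = {prod_encode (i, j) |i j. rat_enum i < u}"

lemma cut_set_mono: "u \<le> v \<Longrightarrow> cut_set u \<subseteq> cut_set v"
  unfolding cut_set_def by force

lemma infinite_cut_set_diff:
  assumes "u < v"
  shows "infinite (cut_set v - cut_set u)"
proof -
  obtain i where i: "u < rat_enum i" "rat_enum i < v"
    using rat_enum_dense[OF assms] .
  have "range (\<lambda>j. prod_encode (i, j)) \<subseteq> cut_set v - cut_set u"
    using i unfolding cut_set_def by (auto simp: prod_encode_eq)
  moreover have "infinite (range (\<lambda>j. prod_encode (i, j)))"
    by (rule range_inj_infinite) (simp add: inj_def prod_encode_eq)
  ultimately show ?thesis
    by (rule infinite_super)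
qed

text \<open>Codes of the finite prefixes of \<open>d\<close>, made odd to avoid the columns below;
  distinct sequences share only the codes of their common prefixes.\<close>

definition branch :: "(nat \<Rightarrow> bool) \<Rightarrow> nat set" where
  "branch d = range (\<lambda>k. 2 * to_nat (map d [0..<k]) + 1)"

lemma infinite_branch: "infinite (branch d)"
  unfolding branch_def
proof (rule range_inj_infinite, rule injI)
  fix k l
  assume "2 * to_nat (map d [0..<k]) + 1 = 2 * to_nat (map d [0..<l]) + (1::nat)"
  then have "map d [0..<k] = map d [0..<l]"
    by simp
  then show "k = l"
    using length_map length_upt by (metis diff_zero)
qed

lemma finite_branch_Int:
  assumes "d \<noteq> d'"
  shows "finite (branch d \<inter> branch d')"
proof -
  obtain i where "d i \<noteq> d' i"
    using assms by blast
  have "k \<le> i" if "map d [0..<k] = map d' [0..<l]" for k l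
  proof (rule ccontr)
    assume "\<not> k \<le> i"
    moreover have "k = l"
      using that by (metis diff_zero length_map length_upt)
    ultimately have "map d [0..<k] ! i = d i" "map d' [0..<l] ! i = d' i"
      by simp_all
    with that \<open>d i \<noteq> d' i\<close> show False
      by simp
  qed
  then have "branch d \<inter> branch d' \<subseteq> (\<lambda>k. 2 * to_nat (map d [0..<k]) + 1) ` {..i}"
    unfolding branch_def by auto
  then show ?thesis
    by (rule finite_subset) simp
qed

lemma infinite_branch_diff: "d \<noteq> d' \<Longrightarrow> infinite (branch d - branch d')"
  using Diff_infinite_finite[OF finite_branch_Int infinite_branch]
  by (metis Diff_Int2 Int_absorb)

definition column :: "nat \<Rightarrow> nat set" where
  "column j = range (\<lambda>i. 2 * prod_encode (j, i))"

lemma infinite_column: "infinite (column j)"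
  unfolding column_def by (rule range_inj_infinite) (simp add: inj_def prod_encode_eq)

lemma column_disjoint: "j \<noteq> k \<Longrightarrow> column j \<inter> column k = {}"
  unfolding column_def by (auto simp: prod_encode_eq)

lemma column_Int_branch: "column j \<inter> branch d = {}"
  unfolding column_def branch_def by auto presburger

text \<open>Codes the point \<open>(u, u \<in> X)\<close> of the graph of the indicator of \<open>X\<close>; the graphs
  of two different sets are incomparable.\<close>

definition graph_code :: "real set \<Rightarrow> real \<Rightarrow> nat \<Rightarrow> bool" where
  "graph_code X u i = (case i of 0 \<Rightarrow> u \<in> X | Suc i \<Rightarrow> cut u i)"

lemma graph_code_eqD:
  assumes "graph_code X u = graph_code Y v"
  shows "u = v" "u \<in> X \<longleftrightarrow> v \<in> Y"
proof -
  have "cut u = cut v"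
  proof
    fix i
    show "cut u i = cut v i"
      using fun_cong[OF assms, of "Suc i"] by (simp add: graph_code_def)
  qed
  then show "u = v"
    using inj_cut by (simp add: inj_eq)
  show "u \<in> X \<longleftrightarrow> v \<in> Y"
    using fun_cong[OF assms, of 0] by (simp add: graph_code_def)
qed

definition columns_and_branches :: "real set \<Rightarrow> nat set set" where
  "columns_and_branches X = range column \<union> range (\<lambda>u. branch (graph_code X u))"

lemma columns_and_branches_almost_disjoint:
  assumes "X \<noteq> Y"
  obtains B where "B \<in> columns_and_branches X" "infinite B"
    "\<And>A. A \<in> columns_and_branches Y \<Longrightarrow> finite (A \<inter> B)"
proof -
  obtain u where u: "u \<in> X \<longleftrightarrow> u \<notin> Y"
    using assms by blast
  have "finite (A \<inter> branch (graph_code X u))" if A: "A \<in> columns_and_branches Y" for A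
  proof (cases "A \<in> range column")
    case True
    then show ?thesis
      using column_Int_branch by auto
  next
    case False
    then obtain v where "A = branch (graph_code Y v)"
      using A unfolding columns_and_branches_def by blast
    moreover have "graph_code Y v \<noteq> graph_code X u"
      using graph_code_eqD u by metis
    ultimately show ?thesis
      using finite_branch_Int by blast
  qed
  moreover have "branch (graph_code X u) \<in> columns_and_branches X"
    unfolding columns_and_branches_def by blast
  ultimately show ?thesis
    using that infinite_branch by blast
qed

lemma columns_and_branches_meet_transversal_finitely:
  assumes "A \<in> columns_and_branches X" "\<And>k. f k \<in> column k"
  shows "finite (A \<inter> range f)"
proof (cases "A \<in> range column")
  case True
  then obtain j where A: "A = column j"
    by blast
  have "A \<inter> range f \<subseteq> {f j}"
  proof
    fix n
    assume "n \<in> A \<inter> range f"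
    then obtain k where "n = f k" "f k \<in> column j"
      using A by blast
    then have "k = j"
      using assms(2)[of k] column_disjoint[of k j] by blast
    with \<open>n = f k\<close> show "n \<in> {f j}"
      by simp
  qed
  then show ?thesis
    by (rule finite_subset) simp
next
  case False
  then obtain u where A: "A = branch (graph_code X u)"
    using assms(1) unfolding columns_and_branches_def by blast
  have "f k \<notin> A" for k
    using assms(2)[of k] column_Int_branch[of k "graph_code X u"] A by blast
  then have "A \<inter> range f = {}"
    by blast
  then show ?thesis
    by simp
qed

lemma incomparable_range:
  fixes f :: "'a \<Rightarrow> real set set"
  assumes "\<And>u v. u \<noteq> v \<Longrightarrow> \<not> f u \<subseteq> f v"
  shows "pairwise_incomparable (range f)" "range f \<approx> (UNIV :: 'a set)"
proof -
  show "pairwise_incomparable (range f)"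
    unfolding pairwise_incomparable_def using assms by (metis rangeE)
  have "inj f"
    using assms by (metis injI order_refl)
  then show "range f \<approx> (UNIV :: 'a set)"
    by (rule inj_on_image_eqpoll_self)
qed

lemma cut_set_chain:
  fixes \<Theta> :: "nat set \<Rightarrow> real set set"
  assumes antitone: "\<And>A B. A \<subseteq> B \<Longrightarrow> \<Theta> B \<subseteq> \<Theta> A"
    and separating: "\<And>A B. infinite (B - A) \<Longrightarrow> \<not> \<Theta> A \<subseteq> \<Theta> B"
  shows "topchain (range (\<lambda>u. \<Theta> (cut_set u)))" "range (\<lambda>u. \<Theta> (cut_set u)) \<approx> (UNIV :: real set)"
proof -
  have le: "\<Theta> (cut_set v) \<subseteq> \<Theta> (cut_set u)" if "u \<le> v" for u v
    using antitone cut_set_mono that by blast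
  then show "topchain (range (\<lambda>u. \<Theta> (cut_set u)))"
    unfolding topchain_def by (metis linear rangeE)
  have "\<Theta> (cut_set u) \<noteq> \<Theta> (cut_set v)" if "u < v" for u v
    using separating[OF infinite_cut_set_diff[OF that]] by blast
  then have "inj (\<lambda>u. \<Theta> (cut_set u))"
    by (metis injI linorder_neq_iff)
  then show "range (\<lambda>u. \<Theta> (cut_set u)) \<approx> (UNIV :: real set)"
    by (rule inj_on_image_eqpoll_self)
qed

lemma branch_antichain:
  fixes \<Theta> :: "nat set \<Rightarrow> real set set"
  assumes separating: "\<And>A B. infinite (B - A) \<Longrightarrow> \<not> \<Theta> A \<subseteq> \<Theta> B"
  shows "pairwise_incomparable (range (\<lambda>u. \<Theta> (branch (cut u))))"
    "range (\<lambda>u. \<Theta> (branch (cut u))) \<approx> (UNIV :: real set)"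
proof -
  have "\<not> \<Theta> (branch (cut u)) \<subseteq> \<Theta> (branch (cut v))" if "u \<noteq> v" for u v
  proof (rule separating)
    have "cut v \<noteq> cut u"
      using inj_cut that by (metis injD)
    then show "infinite (branch (cut v) - branch (cut u))"
      by (rule infinite_branch_diff)
  qed
  from incomparable_range[of "\<lambda>u. \<Theta> (branch (cut u))", OF this]
  show "pairwise_incomparable (range (\<lambda>u. \<Theta> (branch (cut u))))"
    "range (\<lambda>u. \<Theta> (branch (cut u))) \<approx> (UNIV :: real set)"
    by simp_all
qed

section \<open>Intervals converging to 0\<close>

lemma L0_nbhd_avoiding_compact:
  assumes "\<tau> \<in> L0" "compact K" "0 \<notin> K"
  obtains U where "U \<in> \<tau>" "0 \<in> U" "U \<inter> K = {}"
proof -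
  have top: "topspace (top_of \<tau>) = UNIV"
    using topspace_top_of L0_istopology L0_UNIV assms(1) by blast
  have "continuous_map euclidean (top_of \<tau>) id"
    unfolding continuous_map_def using top L0_istopology[OF assms(1)] L0_open[OF assms(1)] by auto
  then have "compactin (top_of \<tau>) K"
    using image_compactin[of euclidean K "top_of \<tau>" id] assms(2) by (simp add: compactin_euclidean_iff)
  then have "closedin (top_of \<tau>) K"
    by (rule compactin_imp_closedin[OF L0_Hausdorff[OF assms(1)]])
  then have "- K \<in> \<tau>"
    using L0_istopology[OF assms(1)] top unfolding closedin_def by (simp add: Compl_eq_Diff_UNIV)
  with assms(3) that show ?thesis
    by blast
qed

lemma L0_far_point_outside:
  assumes "\<tau> \<in> L0" "open W" "0 \<in> W" "W \<notin> nbhds \<tau> 0" "U \<in> \<tau>" "0 \<in> U"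
  obtains y where "y \<in> U" "y \<notin> W" "M < \<bar>y\<bar>"
proof -
  obtain U0 where "U0 \<in> \<tau>" "0 \<in> U0" and U0: "U0 \<inter> (cball 0 M - W) = {}"
    using L0_nbhd_avoiding_compact[OF assms(1) compact_diff[OF compact_cball assms(2)]] assms(3)
    by blast
  have "U \<inter> U0 \<in> \<tau>"
    using assms(5) \<open>U0 \<in> \<tau>\<close> topology_Int[OF L0_istopology[OF assms(1)]] by blast
  then have "\<not> U \<inter> U0 \<subseteq> W"
    using assms(4,6) \<open>0 \<in> U0\<close> nbhdsI by blast
  then obtain y where "y \<in> U" "y \<in> U0" "y \<notin> W"
    by blast
  moreover have "M < \<bar>y\<bar>"
    using \<open>y \<in> U0\<close> \<open>y \<notin> W\<close> U0 by (auto simp: dist_real_def)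
  ultimately show ?thesis
    using that by blast
qed

lemma separated_if_abs_grows:
  fixes x :: "nat \<Rightarrow> real"
  assumes grows: "\<And>n. \<bar>x n\<bar> + 1 < \<bar>x (Suc n)\<bar>" and "m \<noteq> n"
  shows "1 < \<bar>x m - x n\<bar>"
proof -
  have mono: "\<bar>x k\<bar> \<le> \<bar>x (Suc k)\<bar>" for k
    using grows[of k] by linarith
  have grows_less: "\<bar>x i\<bar> + 1 < \<bar>x j\<bar>" if "i < j" for i j
  proof -
    have "\<bar>x (Suc i)\<bar> \<le> \<bar>x j\<bar>"
      by (rule lift_Suc_mono_le[of "\<lambda>n. \<bar>x n\<bar>", OF mono]) (use that in simp)
    with grows[of i] show ?thesis
      by linarith
  qed
  show ?thesis
  proof (cases "m < n")
    case True
    then show ?thesis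
      using grows_less[of m n] abs_triangle_ineq2[of "x n" "x m"] abs_minus_commute[of "x m" "x n"]
      by linarith
  next
    case False
    then have "n < m"
      using \<open>m \<noteq> n\<close> by linarith
    then show ?thesis
      using grows_less[of n m] abs_triangle_ineq2[of "x m" "x n"] by linarith
  qed
qed

lemma L0_far_points_outside:
  fixes N :: "nat \<Rightarrow> real set"
  assumes "\<tau> \<in> L0" "open W" "0 \<in> W" "W \<notin> nbhds \<tau> 0" "\<And>n. N n \<in> \<tau>" "\<And>n. 0 \<in> N n"
  obtains x where "\<And>n. x n \<in> N n" "\<And>n. x n \<notin> W" "\<And>n. 1 < \<bar>x n\<bar>"
    "\<And>m n. m \<noteq> n \<Longrightarrow> 1 < \<bar>x m - x n\<bar>"
proof -
  note point = L0_far_point_outside[OF assms(1-4)]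
  have "\<exists>x. \<forall>n. (x n \<in> N n \<and> x n \<notin> W \<and> 1 < \<bar>x n\<bar>) \<and> \<bar>x n\<bar> + 1 < \<bar>x (Suc n)\<bar>"
  proof (rule dependent_nat_choice)
    obtain y where "y \<in> N 0" "y \<notin> W" "1 < \<bar>y\<bar>"
      using point[OF assms(5)[of 0] assms(6)[of 0], of 1] .
    then show "\<exists>y. y \<in> N 0 \<and> y \<notin> W \<and> 1 < \<bar>y\<bar>"
      by blast
    fix y n
    obtain y' where "y' \<in> N (Suc n)" "y' \<notin> W" "\<bar>y\<bar> + 1 < \<bar>y'\<bar>"
      using point[OF assms(5)[of "Suc n"] assms(6)[of "Suc n"], of "\<bar>y\<bar> + 1"] .
    moreover have "1 < \<bar>y'\<bar>"
      using \<open>\<bar>y\<bar> + 1 < \<bar>y'\<bar>\<close> abs_ge_zero[of y] by linarith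
    ultimately show "\<exists>y'. (y' \<in> N (Suc n) \<and> y' \<notin> W \<and> 1 < \<bar>y'\<bar>) \<and> \<bar>y\<bar> + 1 < \<bar>y'\<bar>"
      by blast
  qed
  then obtain x where x: "\<And>n. x n \<in> N n" "\<And>n. x n \<notin> W" "\<And>n. 1 < \<bar>x n\<bar>"
    and grows: "\<And>n. \<bar>x n\<bar> + 1 < \<bar>x (Suc n)\<bar>"
    by blast
  moreover have "1 < \<bar>x m - x n\<bar>" if "m \<noteq> n" for m n
    using separated_if_abs_grows[of x, OF grows that] .
  ultimately show ?thesis
    using that by blast
qed

locale escaping_intervals =
  fixes \<tau>1 \<tau>2 :: "real set set" and W :: "real set" and x r :: "nat \<Rightarrow> real"
  assumes \<tau>1_in_L0: "\<tau>1 \<in> L0" and \<tau>2_in_L0: "\<tau>2 \<in> L0" and \<tau>1_subset: "\<tau>1 \<subseteq> \<tau>2"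
    and W: "W \<in> \<tau>2" "0 \<in> W" and x_notin_W: "\<And>n. x n \<notin> W"
    and x_far: "\<And>n. 1 < \<bar>x n\<bar>" and x_separated: "\<And>m n. m \<noteq> n \<Longrightarrow> 1 < \<bar>x m - x n\<bar>"
    and r_pos: "\<And>n. 0 < r n" and r_le: "\<And>n. r n \<le> 1 / 4"
    and intervals_converge: "sets_converge_to_0 \<tau>1 (\<lambda>n. ball (x n) (r n))"

lemma escaping_intervals_exist:
  assumes "\<tau>1 \<in> L0star" "\<tau>2 \<in> L0" "\<tau>1 \<subset> \<tau>2"
  obtains W x r where "escaping_intervals \<tau>1 \<tau>2 W x r"
proof -
  have "\<tau>1 \<in> L0"
    using assms(1) by (simp add: L0star_def)
  obtain W where "W \<in> \<tau>2" "W \<notin> \<tau>1"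
    using assms(3) by blast
  then have "open W"
    using L0_open assms(2) by blast
  have "0 \<in> W" "W \<notin> nbhds \<tau>1 0"
    using L0_open_without_0[OF \<open>\<tau>1 \<in> L0\<close> \<open>open W\<close>] L0_openI[OF \<open>\<tau>1 \<in> L0\<close> \<open>open W\<close>] \<open>W \<notin> \<tau>1\<close>
    by blast+
  obtain N where N: "\<And>n. N n \<in> \<tau>1" "\<And>n. 0 \<in> N n" "sets_converge_to_0 \<tau>1 N"
    using L0star_converging_base[OF assms(1)] by blast
  obtain x where x: "\<And>n. x n \<in> N n" "\<And>n. x n \<notin> W" "\<And>n. 1 < \<bar>x n\<bar>"
    and separated: "\<And>m n. m \<noteq> n \<Longrightarrow> 1 < \<bar>x m - x n\<bar>"
    using L0_far_points_outside[where N=N, OF \<open>\<tau>1 \<in> L0\<close> \<open>open W\<close> \<open>0 \<in> W\<close> \<open>W \<notin> nbhds \<tau>1 0\<close> N(1,2)]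
    by blast
  have "\<exists>\<rho>>0. ball (x n) \<rho> \<subseteq> N n" for n
    using open_contains_ball L0_open[OF \<open>\<tau>1 \<in> L0\<close> N(1)] x(1) by blast
  then obtain \<rho> where \<rho>: "\<And>n. 0 < \<rho> n" "\<And>n. ball (x n) (\<rho> n) \<subseteq> N n"
    by metis
  define r where "r n = min (\<rho> n) (1 / 4)" for n
  have "escaping_intervals \<tau>1 \<tau>2 W x r"
  proof unfold_locales
    show "\<tau>1 \<in> L0" "\<tau>2 \<in> L0" "W \<in> \<tau>2" "0 \<in> W" "\<tau>1 \<subseteq> \<tau>2"
      using \<open>\<tau>1 \<in> L0\<close> assms(2,3) \<open>W \<in> \<tau>2\<close> \<open>0 \<in> W\<close> by auto
    show "x n \<notin> W" "1 < \<bar>x n\<bar>" "0 < r n" "r n \<le> 1 / 4" for n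
      using x \<rho>(1) by (auto simp: r_def)
    show "1 < \<bar>x m - x n\<bar>" if "m \<noteq> n" for m n
      using separated[OF that] .
    have "ball (x n) (r n) \<subseteq> N n" for n
      using \<rho>(2)[of n] subset_ball[of "r n" "\<rho> n"] by (auto simp: r_def)
    then show "sets_converge_to_0 \<tau>1 (\<lambda>n. ball (x n) (r n))"
      by (rule sets_converge_to_0_subset[OF N(3)])
  qed
  then show ?thesis
    using that by blast
qed

context escaping_intervals
begin

definition I :: "nat \<Rightarrow> real set" where
  "I n = ball (x n) (r n)"

lemma mem_I_iff: "y \<in> I n \<longleftrightarrow> \<bar>y - x n\<bar> < r n"
  by (simp add: I_def dist_real_def abs_minus_commute)

lemma open_I: "open (I n)"
  by (simp add: I_def)

lemma center_in_I: "x n \<in> I n"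
  using r_pos[of n] by (simp add: mem_I_iff)

lemma zero_notin_I: "0 \<notin> I n"
  using x_far[of n] r_le[of n] by (simp add: mem_I_iff)

lemma I_eqI:
  assumes "\<bar>y - z\<bar> < 1 / 2" "y \<in> I m" "z \<in> I n"
  shows "m = n"
proof (rule ccontr)
  assume "m \<noteq> n"
  then have "1 < \<bar>x m - x n\<bar>"
    by (rule x_separated)
  moreover have "\<bar>y - x m\<bar> < 1 / 4" "\<bar>z - x n\<bar> < 1 / 4"
    using assms(2,3) r_le[of m] r_le[of n] by (simp_all add: mem_I_iff)
  ultimately show False
    using assms(1) by linarith
qed

lemma I_converge: "sets_converge_to_0 \<tau>1 I"
proof -
  have "I = (\<lambda>n. ball (x n) (r n))"
    by (simp add: fun_eq_iff I_def)
  then show ?thesis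
    using intervals_converge by simp
qed

lemma coarsening_I_L0: "coarsening \<tau>2 I \<A> \<in> L0"
  by (rule coarsening_L0[OF \<tau>1_in_L0 \<tau>2_in_L0 \<tau>1_subset I_converge])

lemma subset_coarsening_I: "\<tau>1 \<subseteq> coarsening \<tau>2 I \<A>"
  by (rule subset_coarsening[OF \<tau>1_subset I_converge])

lemma coarsening_I_L0star: "\<tau>2 \<in> L0star \<Longrightarrow> coarsening \<tau>2 I {A} \<in> L0star"
  by (rule coarsening_L0star[OF \<tau>1_in_L0 _ \<tau>1_subset I_converge open_I zero_notin_I])

lemma I_subset_W_Union_iff: "I n \<subseteq> W \<union> (\<Union>m\<in>S. I m) \<longleftrightarrow> n \<in> S"
proof
  assume "I n \<subseteq> W \<union> (\<Union>m\<in>S. I m)"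
  then obtain m where "m \<in> S" "x n \<in> I m"
    using center_in_I[of n] x_notin_W[of n] by blast
  moreover have "m = n"
    using I_eqI[of "x n" "x n" m n] \<open>x n \<in> I m\<close> center_in_I[of n] by simp
  ultimately show "n \<in> S"
    by simp
qed blast

lemma W_Union_I_in_\<tau>2: "W \<union> (\<Union>m\<in>S. I m) \<in> \<tau>2"
proof -
  have "(\<Union>m\<in>S. I m) \<in> \<tau>2"
  proof (rule L0_open_without_0[OF \<tau>2_in_L0])
    show "open (\<Union>m\<in>S. I m)"
      using open_I by (intro open_UN) blast
    show "0 \<notin> (\<Union>m\<in>S. I m)"
      using zero_notin_I by blast
  qed
  then show ?thesis
    by (rule topology_Un[OF L0_istopology[OF \<tau>2_in_L0] W(1)])
qed

lemma W_Union_I_in_coarsening_iff: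
  "W \<union> (\<Union>m\<in>S. I m) \<in> coarsening \<tau>2 I \<A> \<longleftrightarrow> (\<forall>A\<in>\<A>. finite (A - S))"
proof -
  have "{n \<in> A. \<not> I n \<subseteq> W \<union> (\<Union>m\<in>S. I m)} = A - S" for A
    using I_subset_W_Union_iff by blast
  then show ?thesis
    using W_Union_I_in_\<tau>2 W(2) unfolding coarsening_def by simp
qed

lemma coarsening_I_not_subset:
  assumes "\<And>A. A \<in> \<A> \<Longrightarrow> finite (A - S)" "B \<in> \<B>" "infinite (B - S)"
  shows "\<not> coarsening \<tau>2 I \<A> \<subseteq> coarsening \<tau>2 I \<B>"
proof
  assume "coarsening \<tau>2 I \<A> \<subseteq> coarsening \<tau>2 I \<B>"
  moreover have "W \<union> (\<Union>m\<in>S. I m) \<in> coarsening \<tau>2 I \<A>"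
    using assms(1) W_Union_I_in_coarsening_iff by blast
  ultimately have "W \<union> (\<Union>m\<in>S. I m) \<in> coarsening \<tau>2 I \<B>"
    by (rule subsetD)
  with assms(2,3) show False
    using W_Union_I_in_coarsening_iff by blast
qed

text \<open>A diagonal argument: a countable base \<open>N\<close> at \<open>0\<close> would let us pick \<open>f k \<in> C k\<close>
  with \<open>I (f k) \<subseteq> N k\<close>, but the neighbourhood of \<open>0\<close> that omits all \<open>I (f k)\<close> is still open.\<close>

lemma coarsening_I_not_L0star:
  fixes C :: "nat \<Rightarrow> nat set"
  assumes "\<And>k. C k \<in> \<A>" "\<And>k. infinite (C k)"
    and "\<And>A f. A \<in> \<A> \<Longrightarrow> (\<And>k. f k \<in> C k) \<Longrightarrow> finite (A \<inter> range f)"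
  shows "coarsening \<tau>2 I \<A> \<notin> L0star"
proof
  assume "coarsening \<tau>2 I \<A> \<in> L0star"
  then obtain N where N: "\<And>k. N k \<in> coarsening \<tau>2 I \<A>" "\<And>k. 0 \<in> N k"
    "sets_converge_to_0 (coarsening \<tau>2 I \<A>) N"
    using L0star_converging_base by blast
  have "\<forall>k. \<exists>n. n \<in> C k \<and> I n \<subseteq> N k"
  proof
    fix k
    have "finite {n \<in> C k. \<not> I n \<subseteq> N k}"
      using N(1,2) assms(1) unfolding coarsening_def by blast
    then have "infinite (C k - {n \<in> C k. \<not> I n \<subseteq> N k})"
      using assms(2) by (rule Diff_infinite_finite)
    then obtain n where "n \<in> C k - {n \<in> C k. \<not> I n \<subseteq> N k}"
      using infinite_imp_nonempty by blast
    then show "\<exists>n. n \<in> C k \<and> I n \<subseteq> N k"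
      by blast
  qed
  from choice[OF this] obtain f where f: "\<And>k. f k \<in> C k" "\<And>k. I (f k) \<subseteq> N k"
    by blast
  define S where "S = - range f"
  have "finite (A - S)" if "A \<in> \<A>" for A
    using assms(3)[OF that f(1)] unfolding S_def by (simp add: Diff_Compl)
  then have "W \<union> (\<Union>m\<in>S. I m) \<in> coarsening \<tau>2 I \<A>"
    using W_Union_I_in_coarsening_iff by blast
  then have "W \<union> (\<Union>m\<in>S. I m) \<in> nbhds (coarsening \<tau>2 I \<A>) 0"
    by (rule nbhdsI[OF _ _ order_refl]) (use W(2) in blast)
  then obtain k where "N k \<subseteq> W \<union> (\<Union>m\<in>S. I m)"
    by (rule sets_converge_to_0E[OF N(3)])
  then have "f k \<in> S"
    using f(2)[of k] I_subset_W_Union_iff by blast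
  then show False
    unfolding S_def by simp
qed

lemma columns_and_branches_not_L0star: "coarsening \<tau>2 I (columns_and_branches X) \<notin> L0star"
proof (rule coarsening_I_not_L0star)
  show "column k \<in> columns_and_branches X" for k
    unfolding columns_and_branches_def by blast
  show "infinite (column k)" for k
    by (rule infinite_column)
  show "finite (A \<inter> range f)" if "A \<in> columns_and_branches X" "\<And>k. f k \<in> column k" for A f
    using that by (rule columns_and_branches_meet_transversal_finitely)
qed

lemma non_L0star_antichain:
  obtains T where "T \<subseteq> L0 - L0star" "pairwise_incomparable T" "T \<approx> (UNIV :: real set set)"
    "\<forall>\<sigma>\<in>T. \<tau>1 \<subseteq> \<sigma> \<and> \<sigma> \<subseteq> \<tau>2"
proof -
  define f where "f X = coarsening \<tau>2 I (columns_and_branches X)" for X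
  have "\<not> f X \<subseteq> f Y" if XY: "X \<noteq> Y" for X Y
  proof -
    obtain B where "B \<in> columns_and_branches Y" "infinite B"
      and "\<And>A. A \<in> columns_and_branches X \<Longrightarrow> finite (A \<inter> B)"
      using columns_and_branches_almost_disjoint[OF XY[symmetric]] by blast
    then show ?thesis
      unfolding f_def by (intro coarsening_I_not_subset[of _ "- B" B]) (simp_all add: Diff_Compl)
  qed
  from incomparable_range[of f, OF this]
  have "pairwise_incomparable (range f)" "range f \<approx> (UNIV :: real set set)"
    by simp_all
  moreover have "range f \<subseteq> L0 - L0star"
    unfolding f_def using coarsening_I_L0 columns_and_branches_not_L0star by blast
  moreover have "\<forall>\<sigma>\<in>range f. \<tau>1 \<subseteq> \<sigma> \<and> \<sigma> \<subseteq> \<tau>2"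
    unfolding f_def using subset_coarsening_I coarsening_subset by blast
  ultimately show ?thesis
    using that by blast
qed

lemma coarsening_chain_and_antichain:
  obtains R S where "R \<subseteq> L0" "topchain R" "R \<approx> (UNIV :: real set)"
    "S \<subseteq> L0" "pairwise_incomparable S" "S \<approx> (UNIV :: real set)"
    "\<forall>\<sigma>\<in>R \<union> S. \<tau>1 \<subseteq> \<sigma> \<and> \<sigma> \<subseteq> \<tau>2" "\<tau>2 \<in> L0star \<longrightarrow> R \<subseteq> L0star \<and> S \<subseteq> L0star"
proof -
  define \<Theta> where "\<Theta> A = coarsening \<tau>2 I {A}" for A
  have antitone: "\<Theta> B \<subseteq> \<Theta> A" if "A \<subseteq> B" for A B
    unfolding \<Theta>_def by (rule coarsening_antimono) (use that in blast)
  have separating: "\<not> \<Theta> A \<subseteq> \<Theta> B" if "infinite (B - A)" for A B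
    unfolding \<Theta>_def by (rule coarsening_I_not_subset[of _ A B]) (use that in simp_all)
  define R where "R = range (\<lambda>u. \<Theta> (cut_set u))"
  define S where "S = range (\<lambda>u. \<Theta> (branch (cut u)))"
  have "topchain R" "R \<approx> (UNIV :: real set)"
    unfolding R_def using cut_set_chain[of \<Theta>, OF antitone separating] by simp_all
  moreover have "pairwise_incomparable S" "S \<approx> (UNIV :: real set)"
    unfolding S_def using branch_antichain[of \<Theta>, OF separating] by simp_all
  moreover have "R \<subseteq> L0" "S \<subseteq> L0"
    unfolding R_def S_def \<Theta>_def using coarsening_I_L0 by blast+
  moreover have "\<forall>\<sigma>\<in>R \<union> S. \<tau>1 \<subseteq> \<sigma> \<and> \<sigma> \<subseteq> \<tau>2"
    unfolding R_def S_def \<Theta>_def using subset_coarsening_I coarsening_subset by blast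
  moreover have "\<tau>2 \<in> L0star \<longrightarrow> R \<subseteq> L0star \<and> S \<subseteq> L0star"
    unfolding R_def S_def \<Theta>_def using coarsening_I_L0star by blast
  ultimately show ?thesis
    using that by blast
qed

end

section \<open>Stretching the intervals\<close>

text \<open>The odd piecewise linear map with slope \<open>b / a\<close> on \<open>[0, a]\<close>, slope
  \<open>(1 - b) / (1 - a)\<close> on \<open>[a, 1]\<close> and slope \<open>1\<close> beyond, written with ramps
  \<open>max 0 (\<plusminus>t - c)\<close> so that it is continuous by construction.\<close>

definition stretch :: "real \<Rightarrow> real \<Rightarrow> real \<Rightarrow> real" where
  "stretch a b t = b / a * t + ((1 - b) / (1 - a) - b / a) * (max 0 (t - a) - max 0 (- t - a))
     + (1 - (1 - b) / (1 - a)) * (max 0 (t - 1) - max 0 (- t - 1))"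

lemma continuous_stretch: "continuous_on UNIV (stretch a b)"
  unfolding stretch_def by (intro continuous_intros)

lemma stretch_minus: "stretch a b (- t) = - stretch a b t"
  unfolding stretch_def by (simp add: algebra_simps)

lemma stretch_nonneg_cases:
  assumes "0 < a" "a < 1" "0 < b" "b < 1" "0 \<le> t"
  shows "t \<le> a \<Longrightarrow> stretch a b t = b / a * t"
    and "a \<le> t \<Longrightarrow> t \<le> 1 \<Longrightarrow> stretch a b t = b + (1 - b) / (1 - a) * (t - a)"
    and "1 \<le> t \<Longrightarrow> stretch a b t = t"
proof -
  define p q where "p = b / a" and "q = (1 - b) / (1 - a)"
  have pq: "p * a = b" "q * (1 - a) = 1 - b"
    using assms(1,2) unfolding p_def q_def by simp_all
  have "max 0 (- t - a) = 0" "max 0 (- t - 1) = 0"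
    using assms by simp_all
  then have stretch: "stretch a b t = p * t + (q - p) * max 0 (t - a) + (1 - q) * max 0 (t - 1)"
    unfolding stretch_def p_def q_def by simp
  show "t \<le> a \<Longrightarrow> stretch a b t = b / a * t"
    using assms(2) unfolding stretch p_def by simp
  show "a \<le> t \<Longrightarrow> t \<le> 1 \<Longrightarrow> stretch a b t = b + (1 - b) / (1 - a) * (t - a)"
  proof -
    assume "a \<le> t" "t \<le> 1"
    then have "stretch a b t = p * a + q * (t - a)"
      unfolding stretch by (simp add: algebra_simps)
    then show ?thesis
      unfolding pq q_def .
  qed
  show "1 \<le> t \<Longrightarrow> stretch a b t = t"
  proof -
    assume "1 \<le> t"
    then have "stretch a b t = t + (p * a - b) + (q * (1 - a) - (1 - b))"
      unfolding stretch using assms(2) by (simp add: algebra_simps)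
    then show ?thesis
      unfolding pq by simp
  qed
qed

lemma stretch_scale_bounds:
  fixes a b t :: real
  assumes "0 < a" "0 < b" "0 \<le> t" "t \<le> a"
  shows "0 \<le> b / a * t" "b / a * t \<le> b" "t < a \<Longrightarrow> b / a * t < b"
proof -
  have "b / a * a = b"
    using assms(1) by simp
  moreover have "0 < b / a"
    using assms(1,2) by simp
  ultimately show "0 \<le> b / a * t" "b / a * t \<le> b" "t < a \<Longrightarrow> b / a * t < b"
    using assms(3,4) mult_left_mono[OF assms(4), of "b / a"] mult_strict_left_mono[of t a "b / a"]
      mult_nonneg_nonneg[of "b / a" t]
    by simp_all
qed

lemma stretch_affine_bounds:
  fixes a b t :: real
  assumes "a < 1" "b < 1" "a \<le> t" "t \<le> 1"
  shows "0 \<le> (1 - b) / (1 - a) * (t - a)" "(1 - b) / (1 - a) * (t - a) \<le> 1 - b"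
    "t < 1 \<Longrightarrow> (1 - b) / (1 - a) * (t - a) < 1 - b"
proof -
  have "(1 - b) / (1 - a) * (1 - a) = 1 - b"
    using assms(1) by simp
  moreover have "0 < (1 - b) / (1 - a)"
    using assms(1,2) by simp
  moreover have "t - a \<le> 1 - a"
    using assms(4) by simp
  ultimately show "0 \<le> (1 - b) / (1 - a) * (t - a)" "(1 - b) / (1 - a) * (t - a) \<le> 1 - b"
    "t < 1 \<Longrightarrow> (1 - b) / (1 - a) * (t - a) < 1 - b"
    using assms(3) mult_left_mono[of "t - a" "1 - a" "(1 - b) / (1 - a)"]
      mult_strict_left_mono[of "t - a" "1 - a" "(1 - b) / (1 - a)"]
      mult_nonneg_nonneg[of "(1 - b) / (1 - a)" "t - a"]
    by simp_all
qed

lemma stretch_nonneg_bounds: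
  assumes ab: "0 < a" "a < 1" "0 < b" "b < 1" and "0 \<le> t"
  shows "0 \<le> stretch a b t" "t < a \<Longrightarrow> stretch a b t < b" "t < 1 \<Longrightarrow> stretch a b t < 1"
proof -
  note cases = stretch_nonneg_cases[OF assms]
  consider "t \<le> a" | "a \<le> t" "t \<le> 1" | "1 \<le> t"
    by linarith
  then have "0 \<le> stretch a b t \<and> (t < a \<longrightarrow> stretch a b t < b) \<and> (t < 1 \<longrightarrow> stretch a b t < 1)"
  proof cases
    case 1
    then show ?thesis
      using cases(1)[OF 1] stretch_scale_bounds[OF ab(1,3) \<open>0 \<le> t\<close> 1] ab
      by (intro conjI impI) linarith+
  next
    case 2
    then show ?thesis
      using cases(2)[OF 2] stretch_affine_bounds[OF ab(2,4) 2] ab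
      by (intro conjI impI) linarith+
  next
    case 3
    then show ?thesis
      using cases(3)[OF 3] ab
      by (intro conjI impI) linarith+
  qed
  then show "0 \<le> stretch a b t" "t < a \<Longrightarrow> stretch a b t < b" "t < 1 \<Longrightarrow> stretch a b t < 1"
    by simp_all
qed

lemma abs_stretch:
  assumes "0 < a" "a < 1" "0 < b" "b < 1"
  shows "\<bar>stretch a b t\<bar> = stretch a b \<bar>t\<bar>"
  using stretch_nonneg_bounds(1)[OF assms, of t] stretch_nonneg_bounds(1)[OF assms, of "- t"]
    stretch_minus[of a b t]
  by (cases "0 \<le> t") auto

lemma stretch_bounds:
  assumes "0 < a" "a < 1" "0 < b" "b < 1"
  shows "\<bar>t\<bar> < a \<Longrightarrow> \<bar>stretch a b t\<bar> < b"
    and "\<bar>t\<bar> < 1 \<Longrightarrow> \<bar>stretch a b t\<bar> < 1"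
    and "1 \<le> \<bar>t\<bar> \<Longrightarrow> stretch a b t = t"
proof -
  show "\<bar>t\<bar> < a \<Longrightarrow> \<bar>stretch a b t\<bar> < b" "\<bar>t\<bar> < 1 \<Longrightarrow> \<bar>stretch a b t\<bar> < 1"
    using stretch_nonneg_bounds[OF assms, of "\<bar>t\<bar>"] by (simp_all add: abs_stretch[OF assms])
  show "1 \<le> \<bar>t\<bar> \<Longrightarrow> stretch a b t = t"
    using stretch_nonneg_cases(3)[OF assms, of t] stretch_nonneg_cases(3)[OF assms, of "- t"]
      stretch_minus[of a b t]
    by (cases "0 \<le> t") auto
qed

lemma stretch_inverse:
  assumes ab: "0 < a" "a < 1" "0 < b" "b < 1"
  shows "stretch b a (stretch a b t) = t"
proof -
  note ba = ab(3,4,1,2)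
  have "stretch b a (stretch a b t) = t" if "0 \<le> t" for t
  proof -
    consider "t \<le> a" | "a \<le> t" "t \<le> 1" | "1 \<le> t"
      by linarith
    then show ?thesis
    proof cases
      case 1
      then have "stretch b a (stretch a b t) = a / b * (b / a * t)"
        using stretch_scale_bounds[OF ab(1,3) that] stretch_nonneg_cases(1)[OF ab that]
          stretch_nonneg_cases(1)[OF ba] by simp
      then show ?thesis
        using ab by simp
    next
      case 2
      then have "stretch b a (stretch a b t) = a + (1 - a) / (1 - b) * ((1 - b) / (1 - a) * (t - a))"
        using stretch_affine_bounds[OF ab(2,4) 2] stretch_nonneg_cases(2)[OF ab that 2]
          stretch_nonneg_cases(2)[OF ba, of "b + (1 - b) / (1 - a) * (t - a)"] ab by simp
      then show ?thesis
        using ab by simp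
    next
      case 3
      then show ?thesis
        using stretch_nonneg_cases(3)[OF ab that] stretch_nonneg_cases(3)[OF ba] ab by simp
    qed
  qed
  from this[of t] this[of "- t"] show ?thesis
    by (cases "0 \<le> t") (simp_all add: stretch_minus)
qed

definition admissible :: "(nat \<Rightarrow> real) \<Rightarrow> bool" where
  "admissible g \<longleftrightarrow> (\<forall>n. 0 < g n \<and> g n < 1)"

definition radius_ratio :: "nat set \<Rightarrow> nat \<Rightarrow> real" where
  "radius_ratio A n = (if n \<in> A then 1 / 2 else 1 / 4)"

lemma admissible_radius_ratio: "admissible (radius_ratio A)"
  unfolding admissible_def radius_ratio_def by simp

context escaping_intervals
begin

definition shrunk :: "(nat \<Rightarrow> real) \<Rightarrow> nat \<Rightarrow> real set" where
  "shrunk g n = ball (x n) (g n * r n)"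

definition shrunk_topology :: "(nat \<Rightarrow> real) \<Rightarrow> real set set" where
  "shrunk_topology g = coarsening eta (shrunk g) {UNIV}"

lemma shrunk_subset_I:
  assumes "admissible g"
  shows "shrunk g n \<subseteq> I n"
proof -
  have "g n * r n \<le> r n"
    using assms r_pos[of n] unfolding admissible_def by (simp add: mult_left_le_one_le less_imp_le)
  then show ?thesis
    unfolding shrunk_def I_def by (rule subset_ball)
qed

lemma shrunk_topology_L0star:
  assumes "admissible g"
  shows "shrunk_topology g \<in> L0star"
  unfolding shrunk_topology_def
proof (rule coarsening_L0star[OF \<tau>1_in_L0 eta_L0star L0_subset_eta[OF \<tau>1_in_L0]])
  show "sets_converge_to_0 \<tau>1 (shrunk g)"
    by (rule sets_converge_to_0_subset[OF I_converge shrunk_subset_I[OF assms]])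
  show "open (shrunk g n)" for n
    by (simp add: shrunk_def)
  show "0 \<notin> shrunk g n" for n
    using shrunk_subset_I[OF assms] zero_notin_I by blast
qed

lemma subset_shrunk_topology:
  assumes "admissible g"
  shows "\<tau>1 \<subseteq> shrunk_topology g"
  unfolding shrunk_topology_def
  by (rule subset_coarsening[OF L0_subset_eta[OF \<tau>1_in_L0]])
    (rule sets_converge_to_0_subset[OF I_converge shrunk_subset_I[OF assms]])

lemma shrunk_topology_antimono:
  assumes "\<And>n. g n \<le> h n"
  shows "shrunk_topology h \<subseteq> shrunk_topology g"
  unfolding shrunk_topology_def
proof (rule coarsening_antimono_sets)
  fix n
  have "g n * r n \<le> h n * r n"
    using assms[of n] r_pos[of n] by (simp add: mult_right_mono)
  then show "shrunk g n \<subseteq> shrunk h n"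
    unfolding shrunk_def by (rule subset_ball)
qed

lemma boundary_point_of_shrunk:
  assumes g: "admissible g" and h: "admissible h" and "g n < h n"
  shows "x n + g n * r n \<in> shrunk h n" "x n + g n * r n \<notin> ball 0 (1 / 2) \<union> (\<Union>m. shrunk g m)"
proof -
  define y where "y = x n + g n * r n"
  have "0 < g n"
    using g unfolding admissible_def by blast
  then have dist_y: "\<bar>y - x n\<bar> = g n * r n"
    unfolding y_def using r_pos[of n] by simp
  moreover have "g n * r n < h n * r n"
    using assms(3) r_pos[of n] by simp
  ultimately have "y \<in> shrunk h n"
    unfolding shrunk_def by (simp add: dist_real_def abs_minus_commute)
  then have "y \<in> I n"
    using shrunk_subset_I[OF h] by blast
  then have "y \<notin> ball 0 (1 / 2)"
    using x_far[of n] r_le[of n] by (simp add: mem_I_iff)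
  moreover have "y \<notin> shrunk g m" for m
  proof (cases "m = n")
    case True
    then show ?thesis
      using dist_y unfolding shrunk_def by (simp add: dist_real_def abs_minus_commute)
  next
    case False
    then show ?thesis
      using I_eqI[of y y m n] shrunk_subset_I[OF g, of m] \<open>y \<in> I n\<close> by auto
  qed
  ultimately have "y \<notin> ball 0 (1 / 2) \<union> (\<Union>m. shrunk g m)"
    by blast
  with \<open>y \<in> shrunk h n\<close> show "x n + g n * r n \<in> shrunk h n"
    "x n + g n * r n \<notin> ball 0 (1 / 2) \<union> (\<Union>m. shrunk g m)"
    unfolding y_def by simp_all
qed

lemma shrunk_topology_not_subset:
  assumes g: "admissible g" and h: "admissible h" and "infinite {n. g n < h n}"
  shows "\<not> shrunk_topology g \<subseteq> shrunk_topology h"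
proof
  assume sub: "shrunk_topology g \<subseteq> shrunk_topology h"
  define V where "V = ball 0 (1 / 2) \<union> (\<Union>m. shrunk g m)"
  have "open V"
    unfolding V_def shrunk_def by (intro open_Un open_UN ballI open_ball)
  moreover have "{n \<in> UNIV. \<not> shrunk g n \<subseteq> V} = {}"
    unfolding V_def by blast
  ultimately have "V \<in> shrunk_topology g"
    unfolding shrunk_topology_def coarsening_def eta_def by simp
  with sub have "V \<in> shrunk_topology h"
    by blast
  moreover have "0 \<in> V"
    unfolding V_def by simp
  ultimately have "finite {n. \<not> shrunk h n \<subseteq> V}"
    unfolding shrunk_topology_def coarsening_def by simp
  moreover have "\<not> shrunk h n \<subseteq> V" if "g n < h n" for n
    using boundary_point_of_shrunk[OF g h that] unfolding V_def by blast
  then have "{n. g n < h n} \<subseteq> {n. \<not> shrunk h n \<subseteq> V}"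
    by blast
  ultimately have "finite {n. g n < h n}"
    by (rule rev_finite_subset)
  with assms(3) show False
    by contradiction
qed

lemma ball_meets_one_I:
  obtains n where "\<And>y m. \<bar>y - p\<bar> < 1 / 4 \<Longrightarrow> y \<in> I m \<Longrightarrow> m = n"
proof (cases "\<exists>z m. \<bar>z - p\<bar> < 1 / 4 \<and> z \<in> I m")
  case True
  then obtain z m where "\<bar>z - p\<bar> < 1 / 4" "z \<in> I m"
    by blast
  then have "m' = m" if "\<bar>y - p\<bar> < 1 / 4" "y \<in> I m'" for y m'
    using I_eqI[of y z m' m] that by linarith
  then show ?thesis
    using that by blast
qed blast

definition local_stretch :: "(nat \<Rightarrow> real) \<Rightarrow> (nat \<Rightarrow> real) \<Rightarrow> nat \<Rightarrow> real \<Rightarrow> real" where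
  "local_stretch g h n y = x n + r n * stretch (g n) (h n) ((y - x n) / r n)"

text \<open>Any \<open>n\<close> such that \<open>y\<close> lies in no other interval will do, because
  \<open>local_stretch g h n\<close> is the identity outside \<open>I n\<close>.\<close>

definition interval_stretch :: "(nat \<Rightarrow> real) \<Rightarrow> (nat \<Rightarrow> real) \<Rightarrow> real \<Rightarrow> real" where
  "interval_stretch g h y = local_stretch g h (SOME n. \<forall>m. m \<noteq> n \<longrightarrow> y \<notin> I m) y"

lemma continuous_local_stretch: "continuous_on UNIV (local_stretch g h n)"
proof -
  have "continuous_on UNIV (\<lambda>y. (y - x n) / r n)"
    using r_pos[of n] by (intro continuous_intros) simp
  then have "continuous_on UNIV (\<lambda>y. stretch (g n) (h n) ((y - x n) / r n))"
    by (rule continuous_on_compose2[OF continuous_stretch]) simp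
  then show ?thesis
    unfolding local_stretch_def by (intro continuous_intros)
qed

context
  fixes g h :: "nat \<Rightarrow> real"
  assumes g: "admissible g" and h: "admissible h"
begin

lemma stretch_parameters: "0 < g n" "g n < 1" "0 < h n" "h n < 1"
  using g h unfolding admissible_def by blast+

lemma local_stretch_outside:
  assumes "y \<notin> I n"
  shows "local_stretch g h n y = y"
proof -
  have "1 \<le> \<bar>(y - x n) / r n\<bar>"
    using assms r_pos[of n] by (simp add: mem_I_iff)
  then have "stretch (g n) (h n) ((y - x n) / r n) = (y - x n) / r n"
    by (rule stretch_bounds(3)[OF stretch_parameters])
  then show ?thesis
    unfolding local_stretch_def using r_pos[of n] by simp
qed

lemma local_stretch_into:
  assumes "y \<in> I n"
  shows "local_stretch g h n y \<in> I n"
    and "y \<in> shrunk g n \<Longrightarrow> local_stretch g h n y \<in> shrunk h n"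
proof -
  have r: "0 < r n"
    by (rule r_pos)
  have "\<bar>(y - x n) / r n\<bar> < 1"
    using assms r by (simp add: mem_I_iff)
  then have "\<bar>stretch (g n) (h n) ((y - x n) / r n)\<bar> < 1"
    by (rule stretch_bounds(2)[OF stretch_parameters])
  then show "local_stretch g h n y \<in> I n"
    unfolding local_stretch_def mem_I_iff using r by (simp add: abs_mult)
  assume "y \<in> shrunk g n"
  then have "\<bar>(y - x n) / r n\<bar> < g n"
    using r by (simp add: shrunk_def dist_real_def abs_minus_commute pos_divide_less_eq)
  then have "\<bar>stretch (g n) (h n) ((y - x n) / r n)\<bar> < h n"
    by (rule stretch_bounds(1)[OF stretch_parameters])
  then show "local_stretch g h n y \<in> shrunk h n"
    unfolding local_stretch_def shrunk_def using r
    by (simp add: dist_real_def abs_mult mult.commute)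
qed

lemma local_stretch_inverse: "local_stretch h g n (local_stretch g h n y) = y"
proof -
  have "(local_stretch g h n y - x n) / r n = stretch (g n) (h n) ((y - x n) / r n)"
    unfolding local_stretch_def using r_pos[of n] by simp
  then show ?thesis
    unfolding local_stretch_def[of h g n]
    using stretch_inverse[OF stretch_parameters[of n], of "(y - x n) / r n"] r_pos[of n] by simp
qed

lemma interval_stretch_eq:
  assumes "\<And>m. m \<noteq> n \<Longrightarrow> y \<notin> I m"
  shows "interval_stretch g h y = local_stretch g h n y"
proof -
  define n' where "n' = (SOME n. \<forall>m. m \<noteq> n \<longrightarrow> y \<notin> I m)"
  have "\<forall>m. m \<noteq> n \<longrightarrow> y \<notin> I m"
    using assms by blast
  then have n': "\<forall>m. m \<noteq> n' \<longrightarrow> y \<notin> I m"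
    unfolding n'_def by (rule someI)
  show ?thesis
  proof (cases "n' = n")
    case False
    have "y \<notin> I n"
      using n' False by auto
    moreover have "y \<notin> I n'"
      using assms False by auto
    ultimately show ?thesis
      unfolding interval_stretch_def n'_def[symmetric] by (simp add: local_stretch_outside)
  qed (simp add: interval_stretch_def n'_def)
qed

lemma interval_stretch_in_I: "y \<in> I n \<Longrightarrow> interval_stretch g h y = local_stretch g h n y"
  using I_eqI[of y y] by (intro interval_stretch_eq) fastforce

lemma interval_stretch_outside: "(\<And>n. y \<notin> I n) \<Longrightarrow> interval_stretch g h y = y"
  using interval_stretch_eq[of 0 y] local_stretch_outside by simp

lemma continuous_interval_stretch: "continuous_on UNIV (interval_stretch g h)"
proof (rule continuous_at_imp_continuous_on, rule ballI)
  fix p :: real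
  obtain n where n: "\<And>y m. \<bar>y - p\<bar> < 1 / 4 \<Longrightarrow> y \<in> I m \<Longrightarrow> m = n"
    using ball_meets_one_I[of p] by blast
  have "eventually (\<lambda>y. interval_stretch g h y = local_stretch g h n y) (nhds p)"
    unfolding eventually_nhds_metric
  proof (intro exI conjI allI impI)
    fix y :: real
    assume "dist y p < 1 / 4"
    then show "interval_stretch g h y = local_stretch g h n y"
      using n by (intro interval_stretch_eq) (fastforce simp: dist_real_def)
  qed simp
  then have "isCont (interval_stretch g h) p \<longleftrightarrow> isCont (local_stretch g h n) p"
    by (rule isCont_cong)
  then show "isCont (interval_stretch g h) p"
    using continuous_local_stretch continuous_on_eq_continuous_at by blast
qed

lemma interval_stretch_zero: "interval_stretch g h 0 = 0"
  using interval_stretch_outside zero_notin_I by blast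

lemma interval_stretch_shrunk: "interval_stretch g h ` shrunk g n \<subseteq> shrunk h n"
  using shrunk_subset_I[OF g] local_stretch_into(2) interval_stretch_in_I by fastforce

end

lemma interval_stretch_inverse:
  assumes g: "admissible g" and h: "admissible h"
  shows "interval_stretch h g (interval_stretch g h y) = y"
proof (cases "\<exists>n. y \<in> I n")
  case True
  then obtain n where "y \<in> I n"
    by blast
  then have "interval_stretch g h y = local_stretch g h n y"
    by (rule interval_stretch_in_I[OF g h])
  moreover have "local_stretch g h n y \<in> I n"
    using \<open>y \<in> I n\<close> by (rule local_stretch_into(1)[OF g h])
  then have "interval_stretch h g (local_stretch g h n y) = local_stretch h g n (local_stretch g h n y)"
    by (rule interval_stretch_in_I[OF h g])
  ultimately show ?thesis
    using local_stretch_inverse[OF g h] by simp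
next
  case False
  then show ?thesis
    using interval_stretch_outside[OF g h] interval_stretch_outside[OF h g] by simp
qed

lemma shrunk_topologies_homeomorphic:
  assumes "admissible g" "admissible h"
  shows "top_of (shrunk_topology g) homeomorphic_space top_of (shrunk_topology h)"
  unfolding shrunk_topology_def
  by (rule coarsening_eta_homeomorphic[OF continuous_interval_stretch[OF assms]
        continuous_interval_stretch[OF assms(2,1)] interval_stretch_inverse[OF assms]
        interval_stretch_inverse[OF assms(2,1)] interval_stretch_zero[OF assms]
        interval_stretch_shrunk[OF assms] interval_stretch_shrunk[OF assms(2,1)]])

lemma shrunk_chain_and_antichain:
  obtains R S where "R \<subseteq> L0star" "topchain R" "R \<approx> (UNIV :: real set)"
    "S \<subseteq> L0star" "pairwise_incomparable S" "S \<approx> (UNIV :: real set)"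
    "\<forall>\<sigma>\<in>R \<union> S. \<tau>1 \<subseteq> \<sigma>"
    "\<forall>\<sigma>\<in>R \<union> S. \<forall>\<sigma>'\<in>R \<union> S. top_of \<sigma> homeomorphic_space top_of \<sigma>'"
proof -
  define \<Theta> where "\<Theta> A = shrunk_topology (radius_ratio A)" for A
  have antitone: "\<Theta> B \<subseteq> \<Theta> A" if "A \<subseteq> B" for A B
    unfolding \<Theta>_def using that by (intro shrunk_topology_antimono) (auto simp: radius_ratio_def)
  have separating: "\<not> \<Theta> A \<subseteq> \<Theta> B" if "infinite (B - A)" for A B
  proof -
    have "{n. radius_ratio A n < radius_ratio B n} = B - A"
      by (auto simp: radius_ratio_def)
    then show ?thesis
      unfolding \<Theta>_def using that admissible_radius_ratio by (intro shrunk_topology_not_subset) simp_all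
  qed
  define R where "R = range (\<lambda>u. \<Theta> (cut_set u))"
  define S where "S = range (\<lambda>u. \<Theta> (branch (cut u)))"
  have "topchain R" "R \<approx> (UNIV :: real set)"
    unfolding R_def using cut_set_chain[of \<Theta>, OF antitone separating] by simp_all
  moreover have "pairwise_incomparable S" "S \<approx> (UNIV :: real set)"
    unfolding S_def using branch_antichain[of \<Theta>, OF separating] by simp_all
  moreover have RS: "R \<union> S \<subseteq> range \<Theta>"
    unfolding R_def S_def by blast
  then have "R \<subseteq> L0star" "S \<subseteq> L0star" "\<forall>\<sigma>\<in>R \<union> S. \<tau>1 \<subseteq> \<sigma>"
    unfolding \<Theta>_def using shrunk_topology_L0star subset_shrunk_topology admissible_radius_ratio by blast+
  moreover have "\<forall>\<sigma>\<in>R \<union> S. \<forall>\<sigma>'\<in>R \<union> S. top_of \<sigma> homeomorphic_space top_of \<sigma>'"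
    using RS unfolding \<Theta>_def using shrunk_topologies_homeomorphic admissible_radius_ratio by blast
  ultimately show ?thesis
    using that by blast
qed

end

theorem theorem8:
  assumes "\<tau>1 \<in> L0star" and "\<tau>2 \<in> L0" and "\<tau>1 \<subset> \<tau>2"
  shows "\<exists>R S T.
     R \<subseteq> L0 \<and> topchain R \<and> R \<approx> (UNIV :: real set) \<and>
     S \<subseteq> L0 \<and> pairwise_incomparable S \<and> S \<approx> (UNIV :: real set) \<and>
     T \<subseteq> L0 - L0star \<and> pairwise_incomparable T \<and> T \<approx> (UNIV :: real set set) \<and>
     (\<forall>\<tau>\<in>R \<union> S \<union> T. \<tau>1 \<subseteq> \<tau> \<and> \<tau> \<subseteq> \<tau>2) \<and>
     (\<tau>2 \<in> L0star \<longrightarrow> R \<subseteq> L0star \<and> S \<subseteq> L0star) \<and>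
     (\<tau>2 = eta \<longrightarrow> R \<subseteq> L0star \<and> S \<subseteq> L0star \<and>
        (\<forall>\<sigma>\<in>R \<union> S. \<forall>\<sigma>'\<in>R \<union> S. top_of \<sigma> homeomorphic_space top_of \<sigma>'))"
proof -
  obtain W x r where "escaping_intervals \<tau>1 \<tau>2 W x r"
    using escaping_intervals_exist[OF assms] .
  then interpret escaping_intervals \<tau>1 \<tau>2 W x r .
  obtain T where T: "T \<subseteq> L0 - L0star" "pairwise_incomparable T" "T \<approx> (UNIV :: real set set)"
    "\<forall>\<sigma>\<in>T. \<tau>1 \<subseteq> \<sigma> \<and> \<sigma> \<subseteq> \<tau>2"
    by (rule non_L0star_antichain)
  show ?thesis
  proof (cases "\<tau>2 = eta")
    case True
    obtain R S where RS: "R \<subseteq> L0star" "topchain R" "R \<approx> (UNIV :: real set)"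
      "S \<subseteq> L0star" "pairwise_incomparable S" "S \<approx> (UNIV :: real set)"
      "\<forall>\<sigma>\<in>R \<union> S. \<tau>1 \<subseteq> \<sigma>"
      "\<forall>\<sigma>\<in>R \<union> S. \<forall>\<sigma>'\<in>R \<union> S. top_of \<sigma> homeomorphic_space top_of \<sigma>'"
      by (rule shrunk_chain_and_antichain)
    have RS_L0: "R \<subseteq> L0" "S \<subseteq> L0"
      using RS(1,4) by (auto simp: L0star_def)
    then have bounds: "\<forall>\<sigma>\<in>R \<union> S \<union> T. \<tau>1 \<subseteq> \<sigma> \<and> \<sigma> \<subseteq> \<tau>2"
      using RS(7) T(4) L0_subset_eta True by blast
    show ?thesis
      by (intro exI[of _ R] exI[of _ S] exI[of _ T] conjI impI) (rule RS T RS_L0 bounds)+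
  next
    case False
    obtain R S where RS: "R \<subseteq> L0" "topchain R" "R \<approx> (UNIV :: real set)"
      "S \<subseteq> L0" "pairwise_incomparable S" "S \<approx> (UNIV :: real set)"
      "\<forall>\<sigma>\<in>R \<union> S. \<tau>1 \<subseteq> \<sigma> \<and> \<sigma> \<subseteq> \<tau>2" "\<tau>2 \<in> L0star \<longrightarrow> R \<subseteq> L0star \<and> S \<subseteq> L0star"
      by (rule coarsening_chain_and_antichain)
    have bounds: "\<forall>\<sigma>\<in>R \<union> S \<union> T. \<tau>1 \<subseteq> \<sigma> \<and> \<sigma> \<subseteq> \<tau>2"
      using RS(7) T(4) by blast
    show ?thesis
      by (intro exI[of _ R] exI[of _ S] exI[of _ T] conjI) (rule RS T bounds | simp add: False)+
  qed
qed

end
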